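(* Let $\omega\in\{0,1\}^{\mathbb N}$ be a nonsingular Sturmian word and let $p\in\beta\mathbb N$ be an idempotent ultrafilter. Then $p^*(\omega)=\omega$.
   Context: A Sturmian word is an infinite word over $\{0,1\}$ having exactly $k+1$ distinct factors of length $k$ for every $k\ge0$. With $T$ the shift and $\Omega$ the shift-orbit closure of $\omega$, the characteristic word $\tilde\omega$ is the unique element of $\Omega$ all of whose prefixes $v$ are left special ($0v$ and $1v$ both factors of $\omega$); $\omega$ is singular if $T^n(\omega)=\tilde\omega$ for some $n\ge1$, nonsingular otherwise. For a nonempty finite word $u$, $\omega|_u=\{n\in\mathbb N:\omega_n\cdots\omega_{n+|u|-1}=u\}$. $\beta\mathbb N$ is the set of ultrafilters on $\mathbb N$ with addition $A\in p+q$ iff $\{n:A-n\in p\}\in q$ ($A-n=\{m:m+n\in A\}$); an idempotent ultrafilter is a non-principal $p$ with $p+p=p$. For $p\in\beta\mathbb N$, $p^*(\omega)$ is the unique infinite word such that a finite word $u$ is a prefix of $p^*(\omega)$ iff $\omega|_u\in p$. *)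

theory Defs
  imports Main
begin

text \<open>Infinite words over the alphabet {0,1} are functions nat => nat taking values in {0,1}.
  Positions are indexed from 0.\<close>

definition binary_word :: "(nat \<Rightarrow> nat) \<Rightarrow> bool" where
  "binary_word w \<longleftrightarrow> (\<forall>n. w n \<in> {0, 1})"

definition factor_at :: "(nat \<Rightarrow> nat) \<Rightarrow> nat \<Rightarrow> nat \<Rightarrow> nat list" where
  "factor_at w i k = map w [i..<i + k]"

definition factors :: "(nat \<Rightarrow> nat) \<Rightarrow> nat \<Rightarrow> nat list set" where
  "factors w k = {factor_at w i k | i. True}"

definition is_factor :: "nat list \<Rightarrow> (nat \<Rightarrow> nat) \<Rightarrow> bool" where
  "is_factor u w \<longleftrightarrow> (\<exists>i. factor_at w i (length u) = u)"

definition sturmian :: "(nat \<Rightarrow> nat) \<Rightarrow> bool" where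
  "sturmian w \<longleftrightarrow> binary_word w \<and> (\<forall>k. card (factors w k) = k + 1)"

definition shift :: "(nat \<Rightarrow> nat) \<Rightarrow> (nat \<Rightarrow> nat)" where
  "shift w = (\<lambda>n. w (Suc n))"

definition is_prefix :: "nat list \<Rightarrow> (nat \<Rightarrow> nat) \<Rightarrow> bool" where
  "is_prefix u x \<longleftrightarrow> map x [0..<length u] = u"

text \<open>Shift-orbit closure of w in the product topology on {0,1}^N: the words all of
  whose prefixes are factors of w.\<close>
definition orbit_closure :: "(nat \<Rightarrow> nat) \<Rightarrow> (nat \<Rightarrow> nat) set" where
  "orbit_closure w = {x. \<forall>k. is_factor (map x [0..<k]) w}"

definition left_special :: "nat list \<Rightarrow> (nat \<Rightarrow> nat) \<Rightarrow> bool" where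
  "left_special v w \<longleftrightarrow> is_factor (0 # v) w \<and> is_factor (1 # v) w"

definition is_characteristic :: "(nat \<Rightarrow> nat) \<Rightarrow> (nat \<Rightarrow> nat) \<Rightarrow> bool" where
  "is_characteristic w x \<longleftrightarrow> x \<in> orbit_closure w \<and> (\<forall>k. left_special (map x [0..<k]) w)"

definition characteristic :: "(nat \<Rightarrow> nat) \<Rightarrow> (nat \<Rightarrow> nat)" where
  "characteristic w = (THE x. is_characteristic w x)"

definition singular :: "(nat \<Rightarrow> nat) \<Rightarrow> bool" where
  "singular w \<longleftrightarrow> (\<exists>n\<ge>1. (shift ^^ n) w = characteristic w)"

definition ultrafilter_on_nat :: "nat set set \<Rightarrow> bool" where
  "ultrafilter_on_nat p \<longleftrightarrow>
     UNIV \<in> p \<and> {} \<notin> p \<and>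
     (\<forall>A B. A \<in> p \<and> A \<subseteq> B \<longrightarrow> B \<in> p) \<and>
     (\<forall>A B. A \<in> p \<and> B \<in> p \<longrightarrow> A \<inter> B \<in> p) \<and>
     (\<forall>A. A \<in> p \<or> - A \<in> p)"

definition nonprincipal :: "nat set set \<Rightarrow> bool" where
  "nonprincipal p \<longleftrightarrow> (\<forall>n. {n} \<notin> p)"

definition minus_set :: "nat set \<Rightarrow> nat \<Rightarrow> nat set" where
  "minus_set A n = {m. m + n \<in> A}"

definition ultra_plus :: "nat set set \<Rightarrow> nat set set \<Rightarrow> nat set set" where
  "ultra_plus p q = {A. {n. minus_set A n \<in> p} \<in> q}"

definition idempotent_ultrafilter :: "nat set set \<Rightarrow> bool" where
  "idempotent_ultrafilter p \<longleftrightarrow> ultrafilter_on_nat p \<and> nonprincipal p \<and> ultra_plus p p = p"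

definition occurrences :: "(nat \<Rightarrow> nat) \<Rightarrow> nat list \<Rightarrow> nat set" where
  "occurrences w u = {n. factor_at w n (length u) = u}"

definition pstar :: "nat set set \<Rightarrow> (nat \<Rightarrow> nat) \<Rightarrow> (nat \<Rightarrow> nat)" where
  "pstar p w = (THE x. \<forall>u. u \<noteq> [] \<longrightarrow> (is_prefix u x \<longleftrightarrow> occurrences w u \<in> p))"

end

theory Submission
  imports Defs "HOL-Library.Fun_Lexorder"
begin

text \<open>A Sturmian word w is balanced, and balance makes the shift preserve the cyclic
  lexicographic order on the orbit closure of w (a word starting with 0 is moved below one
  starting with 1). For binary x, p*(x) is the p-limit of the shifts of x; being a limit, it
  preserves the weak cyclic order, and for idempotent p it satisfies p*(p*(x)) = p*(x).
  If y = p*(w) differed from w, nonsingularity of w would put shifts of w strictly inside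
  both arcs between w and y. Applying p* to the two resulting cyclic triples gives y between
  two of its own shifts in both orientations, so two of them coincide; but no point of the
  orbit closure is eventually periodic.\<close>

section \<open>Factors of infinite words\<close>

lemma factor_at_length [simp]: "length (factor_at w i k) = k"
  by (simp add: factor_at_def)

lemma factor_at_nth [simp]: "t < k \<Longrightarrow> factor_at w i k ! t = w (i + t)"
  by (simp add: factor_at_def)

lemma factor_at_eq_iff: "factor_at w i k = factor_at x j k \<longleftrightarrow> (\<forall>t<k. w (i + t) = x (j + t))"
  by (auto simp: list_eq_iff_nth_eq)

lemma factor_at_Suc: "factor_at w i (Suc k) = w i # factor_at w (Suc i) k"
  by (simp add: factor_at_def upt_conv_Cons del: upt_Suc)

lemma take_factor_at: "j \<le> k \<Longrightarrow> take j (factor_at w i k) = factor_at w i j"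
  by (simp add: factor_at_def take_map)

lemma tl_factor_at: "tl (factor_at w i (Suc k)) = factor_at w (Suc i) k"
  by (simp add: factor_at_Suc)

lemma funpow_shift: "(shift ^^ k) x = (\<lambda>n. x (n + k))"
  by (induction k arbitrary: x) (auto simp: shift_def funpow_Suc_right)

lemma finite_factors:
  assumes "binary_word w" shows "finite (factors w k)"
proof (rule finite_subset)
  show "factors w k \<subseteq> {xs. set xs \<subseteq> {0, 1} \<and> length xs = k}"
    using assms by (auto simp: factors_def binary_word_def factor_at_def) (metis gr_implies_not0)
  show "finite {xs. set xs \<subseteq> {0::nat, 1} \<and> length xs = k}"
    by (rule finite_lists_length_eq) simp
qed

lemma factors_take: "take j ` factors w (Suc j) = factors w j"
  by (auto simp: factors_def take_factor_at image_iff) (metis le_SucI order_refl take_factor_at)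

lemma card_factors_Suc_ge:
  assumes "binary_word w" shows "card (factors w j) \<le> card (factors w (Suc j))"
  using card_image_le[OF finite_factors[OF assms]] by (metis factors_take)

lemma card_factors_pos:
  assumes "binary_word w" shows "card (factors w j) \<ge> 1"
proof -
  have "factor_at w 0 j \<in> factors w j" by (auto simp: factors_def)
  thus ?thesis using finite_factors[OF assms, of j] by (auto simp: Suc_le_eq card_gt_0_iff)
qed

lemma card_image_add_two_le:
  assumes "finite A" "a \<in> A" "a' \<in> A" "b \<in> A" "b' \<in> A" "a \<noteq> a'" "b \<noteq> b'"
    and "f a = f a'" "f b = f b'" "f a \<noteq> f b"
  shows "card (f ` A) + 2 \<le> card A"
proof -
  have "f x \<in> f ` (A - {a', b'})" if x: "x \<in> A" for x
  proof -
    have ab: "a \<in> A - {a', b'}" "b \<in> A - {a', b'}" using assms by auto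
    consider "x = a'" | "x = b'" | "x \<in> A - {a', b'}" using x by blast
    then show ?thesis using ab assms(8,9) by cases (metis image_eqI)+
  qed
  hence "f ` A \<subseteq> f ` (A - {a', b'})" by blast
  hence "card (f ` A) \<le> card (A - {a', b'})"
    by (meson assms(1) card_image_le card_mono finite_Diff finite_imageI order_trans)
  also have "\<dots> = card A - card {a', b'}"
    using assms by (subst card_Diff_subset) auto
  moreover have "card {a', b'} \<le> card A"
    using assms by (intro card_mono) auto
  moreover have "card {a', b'} = 2"
    using assms(8-10) by (cases "a' = b'") auto
  ultimately show ?thesis by linarith
qed

lemma orbit_closure_iff: "x \<in> orbit_closure w \<longleftrightarrow> (\<forall>k. \<exists>i. factor_at w i k = factor_at x 0 k)"
proof -
  have "map x [0..<k] = factor_at x 0 k" for k by (simp add: factor_at_def)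
  thus ?thesis unfolding orbit_closure_def is_factor_def by auto
qed

section \<open>Lexicographic and cyclic order\<close>

lemma less_fun_linear:
  fixes f g :: "nat \<Rightarrow> 'b::linorder"
  assumes "f \<noteq> g" shows "less_fun f g \<or> less_fun g f"
proof -
  define k where "k = (LEAST t. f t \<noteq> g t)"
  have "f k \<noteq> g k" unfolding k_def by (rule LeastI_ex) (use assms in auto)
  moreover have "\<forall>t<k. f t = g t" unfolding k_def using not_less_Least by blast
  ultimately show ?thesis unfolding less_fun_def by (metis neq_iff)
qed

lemma less_fun_first:
  fixes f g :: "nat \<Rightarrow> 'b::linorder"
  shows "f 0 < g 0 \<Longrightarrow> less_fun f g"
  unfolding less_fun_def by (intro exI[of _ 0]) simp

lemma less_fun_shift: "f 0 = g 0 \<Longrightarrow> less_fun (shift f) (shift g) \<Longrightarrow> less_fun f g"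
  unfolding less_fun_def shift_def by (metis less_Suc_eq_0_disj)

lemma less_fun_prefix_cong:
  assumes "less_fun f g" "\<forall>t<L. f t = f' t \<and> g t = g' t" "d < L" "f d \<noteq> g d"
  shows "less_fun f' g'"
proof -
  obtain k where k: "f k < g k" "\<forall>t<k. f t = g t" using assms(1) by (auto elim: less_funE)
  have "k < L" using k(2) assms(3,4) by (metis le_less_trans not_le)
  thus ?thesis using k assms(2) by (auto simp: less_fun_def)
qed

definition lex_le :: "('a::linorder \<Rightarrow> 'b::linorder) \<Rightarrow> ('a \<Rightarrow> 'b) \<Rightarrow> bool" where
  "lex_le f g \<longleftrightarrow> \<not> less_fun g f"

lemma lex_le_first:
  fixes f g :: "nat \<Rightarrow> 'b::linorder"
  shows "lex_le f g \<Longrightarrow> f 0 \<le> g 0"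
  unfolding lex_le_def using less_fun_first[of g f] by (meson not_le)

lemma lex_le_shift: "f 0 = g 0 \<Longrightarrow> lex_le f g \<Longrightarrow> lex_le (shift f) (shift g)"
  unfolding lex_le_def using less_fun_shift by metis

definition cyclically :: "('a \<Rightarrow> 'a \<Rightarrow> bool) \<Rightarrow> 'a \<Rightarrow> 'a \<Rightarrow> 'a \<Rightarrow> bool" where
  "cyclically R a b c \<longleftrightarrow> R a b \<and> R b c \<or> R b c \<and> R c a \<or> R c a \<and> R a b"

lemma cyclically_rotate: "cyclically R a b c \<longleftrightarrow> cyclically R b c a"
  unfolding cyclically_def by blast

abbreviation cyc_less :: "(nat \<Rightarrow> 'b::linorder) \<Rightarrow> (nat \<Rightarrow> 'b) \<Rightarrow> (nat \<Rightarrow> 'b) \<Rightarrow> bool" where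
  "cyc_less \<equiv> cyclically less_fun"

abbreviation cyc_le :: "(nat \<Rightarrow> 'b::linorder) \<Rightarrow> (nat \<Rightarrow> 'b) \<Rightarrow> (nat \<Rightarrow> 'b) \<Rightarrow> bool" where
  "cyc_le \<equiv> cyclically lex_le"

lemmas less_fun_strict_linear = less_fun_irrefl less_fun_trans less_fun_linear less_fun_asym

lemma cyc_le_iff_not_cyc_less: "cyc_le a b c \<longleftrightarrow> \<not> cyc_less a c b"
  unfolding cyclically_def lex_le_def by (metis less_fun_strict_linear)

lemma cyc_less_imp_cyc_le: "cyc_less a b c \<Longrightarrow> cyc_le a b c"
  unfolding cyclically_def lex_le_def by (metis less_fun_strict_linear)

lemma cyc_less_distinct: "cyc_less a b c \<Longrightarrow> a \<noteq> b \<and> b \<noteq> c \<and> a \<noteq> c"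
  unfolding cyclically_def by (metis less_fun_strict_linear)

lemma cyc_le_distinct_imp_cyc_less: "cyc_le a b c \<Longrightarrow> a \<noteq> b \<Longrightarrow> b \<noteq> c \<Longrightarrow> a \<noteq> c \<Longrightarrow> cyc_less a b c"
  unfolding cyclically_def lex_le_def by (metis less_fun_strict_linear)

lemma cyc_less_asym: "cyc_less a b c \<Longrightarrow> \<not> cyc_less a c b"
  unfolding cyclically_def by (metis less_fun_strict_linear)

lemma cyc_less_cases: "a \<noteq> b \<Longrightarrow> b \<noteq> c \<Longrightarrow> a \<noteq> c \<Longrightarrow> cyc_less a b c \<or> cyc_less a c b"
  unfolding cyclically_def by (metis less_fun_strict_linear)

lemma cyc_le_antisym: "cyc_le a b c \<Longrightarrow> cyc_le b a c \<Longrightarrow> a = b \<or> b = c \<or> a = c"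
  unfolding cyclically_def lex_le_def by (metis less_fun_strict_linear)

lemma cyc_less_trans: "cyc_less z a b \<Longrightarrow> cyc_less z b c \<Longrightarrow> cyc_less z a c"
  unfolding cyclically_def by (metis less_fun_strict_linear)

lemma cyc_less_interleave: "cyc_less a x b \<Longrightarrow> cyc_less b z a \<Longrightarrow> cyc_less a x z \<and> cyc_less x b z"
  unfolding cyclically_def by (metis less_fun_strict_linear)

lemma cyc_less_prefix_cong:
  assumes "\<forall>t<L. b t = b' t" "d1 < L" "b d1 \<noteq> a d1" "d2 < L" "b d2 \<noteq> c d2"
  shows "cyc_less a b c \<longleftrightarrow> cyc_less a b' c"
proof -
  have "less_fun a b \<longleftrightarrow> less_fun a b'" "less_fun b a \<longleftrightarrow> less_fun b' a"
    "less_fun b c \<longleftrightarrow> less_fun b' c" "less_fun c b \<longleftrightarrow> less_fun c b'"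
    using assms less_fun_prefix_cong[of _ _ L] by (smt (verit))+
  thus ?thesis unfolding cyclically_def by simp
qed

lemma transp_chain:
  assumes "transp R" "\<And>n. R (x n) (x (Suc n))"
  shows "k < m \<Longrightarrow> R (x k) (x m)"
proof (induction m)
  case (Suc m)
  show ?case
  proof (cases "k = m")
    case False
    with Suc have "R (x k) (x m)" by simp
    thus ?thesis using assms(2)[of m] transpD[OF assms(1)] by blast
  qed (use assms(2) in simp)
qed simp

section \<open>Limits along an ultrafilter\<close>

locale nat_ultrafilter =
  fixes p :: "nat set set"
  assumes ultrafilter: "ultrafilter_on_nat p"
begin

lemma UNIV_mem: "UNIV \<in> p"
  using ultrafilter by (simp add: ultrafilter_on_nat_def)

lemma empty_not_mem: "{} \<notin> p"
  using ultrafilter by (simp add: ultrafilter_on_nat_def)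

lemma mem_mono: "A \<in> p \<Longrightarrow> A \<subseteq> B \<Longrightarrow> B \<in> p"
  using ultrafilter unfolding ultrafilter_on_nat_def by blast

lemma Int_mem: "A \<in> p \<Longrightarrow> B \<in> p \<Longrightarrow> A \<inter> B \<in> p"
  using ultrafilter unfolding ultrafilter_on_nat_def by blast

lemma mem_or_Compl_mem: "A \<in> p \<or> - A \<in> p"
  using ultrafilter unfolding ultrafilter_on_nat_def by blast

lemma mem_nonempty: "A \<in> p \<Longrightarrow> \<exists>x. x \<in> A"
  using empty_not_mem by (metis equals0I)

lemma disjoint_mems: "A \<in> p \<Longrightarrow> B \<in> p \<Longrightarrow> A \<inter> B \<noteq> {}"
  using Int_mem empty_not_mem by fastforce

lemma Un_mem_cases: "A \<union> B \<in> p \<Longrightarrow> A \<in> p \<or> B \<in> p"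
proof (rule ccontr)
  assume AB: "A \<union> B \<in> p" "\<not> (A \<in> p \<or> B \<in> p)"
  hence "- A \<inter> - B \<in> p" using mem_or_Compl_mem Int_mem by blast
  thus False using disjoint_mems[OF AB(1)] by auto
qed

text \<open>For a binary word x, ulim x is the p-limit of the shifts of x; it agrees with x on
  p-many windows of every length, which is exactly p*(x).\<close>

definition ulim :: "(nat \<Rightarrow> nat) \<Rightarrow> nat \<Rightarrow> nat" where
  "ulim x k = (if {i. x (i + k) = 1} \<in> p then 1 else 0)"

lemma ulim_letter: "ulim x k = 0 \<or> ulim x k = 1"
  by (simp add: ulim_def)

lemma ulim_agrees:
  assumes "binary_word x" shows "{i. x (i + k) = ulim x k} \<in> p"
proof (cases "{i. x (i + k) = 1} \<in> p")
  case False
  hence "- {i. x (i + k) = 1} \<in> p" using mem_or_Compl_mem by auto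
  moreover have "- {i. x (i + k) = 1} = {i. x (i + k) = 0}"
    using assms by (auto simp: binary_word_def)
  ultimately show ?thesis using False by (simp add: ulim_def)
qed (simp add: ulim_def)

lemma ulim_prefix_agrees:
  assumes "binary_word x" shows "{i. \<forall>t<K. x (i + t) = ulim x t} \<in> p"
proof (induction K)
  case (Suc K)
  have "{i. \<forall>t<K. x (i + t) = ulim x t} \<inter> {i. x (i + K) = ulim x K} \<in> p"
    using Int_mem[OF Suc ulim_agrees[OF assms]] .
  moreover have "{i. \<forall>t<K. x (i + t) = ulim x t} \<inter> {i. x (i + K) = ulim x K}
      = {i. \<forall>t<Suc K. x (i + t) = ulim x t}"
    by (auto simp: less_Suc_eq)
  ultimately show ?case by simp
qed (simp add: UNIV_mem)

lemma occurrences_ulim_prefix: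
  assumes "binary_word x"
  shows "occurrences x (map (ulim x) [0..<K]) \<in> p"
proof -
  have "occurrences x (map (ulim x) [0..<K]) = {i. \<forall>t<K. x (i + t) = ulim x t}"
    by (auto simp: occurrences_def factor_at_def list_eq_iff_nth_eq)
  thus ?thesis using ulim_prefix_agrees[OF assms] by simp
qed

lemma pstar_eq_ulim:
  assumes bin: "binary_word x" shows "pstar p x = ulim x"
  unfolding pstar_def
proof (rule the_equality)
  show "\<forall>u. u \<noteq> [] \<longrightarrow> is_prefix u (ulim x) = (occurrences x u \<in> p)"
  proof (intro allI impI iffI)
    fix u :: "nat list"
    assume "is_prefix u (ulim x)"
    thus "occurrences x u \<in> p"
      using occurrences_ulim_prefix[OF bin, of "length u"] by (simp add: is_prefix_def)
  next
    fix u :: "nat list"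
    assume u: "occurrences x u \<in> p"
    have "occurrences x u \<inter> occurrences x (map (ulim x) [0..<length u]) \<noteq> {}"
      by (rule disjoint_mems[OF u occurrences_ulim_prefix[OF bin]])
    thus "is_prefix u (ulim x)"
      by (auto simp: occurrences_def is_prefix_def)
  qed
next
  fix z assume z: "\<forall>u. u \<noteq> [] \<longrightarrow> is_prefix u z = (occurrences x u \<in> p)"
  show "z = ulim x"
  proof
    fix k
    have "occurrences x (map z [0..<Suc k]) \<in> p"
      using z[rule_format, of "map z [0..<Suc k]"] by (simp add: is_prefix_def del: upt_Suc)
    hence "occurrences x (map z [0..<Suc k]) \<inter> occurrences x (map (ulim x) [0..<Suc k]) \<noteq> {}"
      by (rule disjoint_mems[OF _ occurrences_ulim_prefix[OF bin]])
    hence "map z [0..<Suc k] = map (ulim x) [0..<Suc k]"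
      by (auto simp: occurrences_def)
    thus "z k = ulim x k" by (simp del: upt_Suc)
  qed
qed

lemma ulim_funpow_shift: "ulim ((shift ^^ m) x) = (shift ^^ m) (ulim x)"
  unfolding funpow_shift by (auto simp: fun_eq_iff ulim_def add.assoc)

lemma ulim_ulim:
  assumes idem: "ultra_plus p p = p" shows "ulim (ulim x) = ulim x"
proof
  fix k
  have "ulim x k = 1 \<longleftrightarrow> {i. x (i + k) = 1} \<in> ultra_plus p p"
    using idem by (simp add: ulim_def)
  also have "\<dots> \<longleftrightarrow> {j. {i. x (i + (j + k)) = 1} \<in> p} \<in> p"
    unfolding ultra_plus_def minus_set_def by (simp add: add.assoc)
  also have "\<dots> \<longleftrightarrow> ulim (ulim x) k = 1"
    by (simp add: ulim_def)
  finally show "ulim (ulim x) k = ulim x k"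
    using ulim_letter[of x k] ulim_letter[of "ulim x" k] by auto
qed

lemma lex_le_ulim:
  assumes bin: "binary_word a" "binary_word b"
    and le: "{i. lex_le ((shift ^^ i) a) ((shift ^^ i) b)} \<in> p"
  shows "lex_le (ulim a) (ulim b)"
  unfolding lex_le_def
proof
  assume "less_fun (ulim b) (ulim a)"
  then obtain n where n: "ulim b n < ulim a n" "\<And>t. t < n \<Longrightarrow> ulim b t = ulim a t"
    by (erule less_funE)
  have "{i. \<forall>t<Suc n. a (i + t) = ulim a t} \<inter> {i. \<forall>t<Suc n. b (i + t) = ulim b t}
      \<inter> {i. lex_le ((shift ^^ i) a) ((shift ^^ i) b)} \<in> p"
    using Int_mem[OF Int_mem[OF ulim_prefix_agrees[OF bin(1)] ulim_prefix_agrees[OF bin(2)]] le] .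
  then obtain i where i: "\<forall>t<Suc n. a (i + t) = ulim a t" "\<forall>t<Suc n. b (i + t) = ulim b t"
    "lex_le ((shift ^^ i) a) ((shift ^^ i) b)"
    using mem_nonempty by blast
  have agree: "a (t + i) = ulim a t" "b (t + i) = ulim b t" if "t \<le> n" for t
    using i(1,2) that less_Suc_eq_le add.commute[of t i] by metis+
  have "less_fun ((shift ^^ i) b) ((shift ^^ i) a)"
    unfolding less_fun_def funpow_shift
  proof (intro exI[of _ n] conjI allI impI)
    show "b (n + i) < a (n + i)" using agree[of n] n(1) by simp
    fix t assume "t < n"
    thus "b (t + i) = a (t + i)" using agree[of t] n(2) by simp
  qed
  thus False using i(3) unfolding lex_le_def by blast
qed

lemma cyc_le_ulim:
  assumes bin: "binary_word a" "binary_word b" "binary_word c"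
    and cyc: "\<And>i. cyc_le ((shift ^^ i) a) ((shift ^^ i) b) ((shift ^^ i) c)"
  shows "cyc_le (ulim a) (ulim b) (ulim c)"
proof -
  define L where "L x y = {i. lex_le ((shift ^^ i) x) ((shift ^^ i) y)}" for x y
  have "(L a b \<inter> L b c) \<union> (L b c \<inter> L c a) \<union> (L c a \<inter> L a b) = UNIV"
    using cyc unfolding L_def cyclically_def by blast
  hence "L a b \<inter> L b c \<in> p \<or> L b c \<inter> L c a \<in> p \<or> L c a \<inter> L a b \<in> p"
    using UNIV_mem Un_mem_cases by metis
  moreover have "lex_le (ulim x) (ulim y)" if "L x y \<inter> L y z \<in> p \<or> L z x \<inter> L x y \<in> p"
    and "binary_word x" "binary_word y" for x y z
    using that mem_mono lex_le_ulim unfolding L_def by blast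
  ultimately show ?thesis
    using bin unfolding cyclically_def by blast
qed

end

section \<open>Words of bounded complexity\<close>

lemma factor_determines_continuation:
  assumes bin: "binary_word x" and stall: "card (factors x (Suc j)) \<le> card (factors x j)"
    and eq: "factor_at x i j = factor_at x i' j"
  shows "x (i + t) = x (i' + t)"
proof -
  have "card (take j ` factors x (Suc j)) = card (factors x (Suc j))"
    using stall card_factors_Suc_ge[OF bin, of j] by (simp add: factors_take)
  hence inj: "inj_on (take j) (factors x (Suc j))"
    by (rule eq_card_imp_inj_on[OF finite_factors[OF bin]])
  have next_letter: "x (k + j) = x (k' + j)" if "factor_at x k j = factor_at x k' j" for k k'
  proof -
    have "take j (factor_at x k (Suc j)) = take j (factor_at x k' (Suc j))"
      using that by (simp add: take_factor_at)
    hence "factor_at x k (Suc j) = factor_at x k' (Suc j)"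
      using inj by (auto simp: inj_on_def factors_def)
    thus ?thesis unfolding factor_at_eq_iff by simp
  qed
  show ?thesis
  proof (induction t rule: less_induct)
    case (less t)
    show ?case
    proof (cases "t < j")
      case True thus ?thesis using eq by (simp add: factor_at_eq_iff)
    next
      case False
      have "factor_at x (i + (t - j)) j = factor_at x (i' + (t - j)) j"
        unfolding factor_at_eq_iff
      proof (intro allI impI)
        fix s assume "s < j"
        hence "t - j + s < t" using False by auto
        thus "x (i + (t - j) + s) = x (i' + (t - j) + s)" using less by (simp add: add.assoc)
      qed
      from next_letter[OF this] False show ?thesis by (simp add: add.assoc)
    qed
  qed
qed

lemma card_factors_le_if_stall:
  assumes bin: "binary_word x" and stall: "card (factors x (Suc j)) \<le> card (factors x j)"
  shows "card (factors x m) \<le> card (factors x j)"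
proof (cases "m \<le> j")
  case True
  thus ?thesis
  proof (induction j)
    case (Suc j)
    thus ?case using card_factors_Suc_ge[OF bin, of j] by (cases "m = Suc j") auto
  qed simp
next
  case False
  have "inj_on (take j) (factors x m)"
  proof (rule inj_onI)
    fix u v assume "u \<in> factors x m" "v \<in> factors x m" and eq: "take j u = take j v"
    then obtain i i' where u: "u = factor_at x i m" and v: "v = factor_at x i' m"
      by (auto simp: factors_def)
    have "factor_at x i j = factor_at x i' j"
      using eq False unfolding u v by (simp add: take_factor_at)
    hence "x (i + t) = x (i' + t)" for t
      by (rule factor_determines_continuation[OF bin stall])
    thus "u = v" unfolding u v factor_at_eq_iff by blast
  qed
  moreover have "take j ` factors x m \<subseteq> factors x j"
    using False by (auto simp: factors_def take_factor_at)
  ultimately show ?thesis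
    using card_inj_on_le[OF _ _ finite_factors[OF bin]] by blast
qed

lemma morse_hedlund:
  assumes bin: "binary_word x" and "card (factors x K) \<le> K"
  shows "\<exists>B. \<forall>m. card (factors x m) \<le> B"
proof -
  have "\<exists>j<K. card (factors x (Suc j)) \<le> card (factors x j)"
  proof (rule ccontr)
    assume "\<not> ?thesis"
    hence "j \<le> K \<Longrightarrow> j + 1 \<le> card (factors x j)" for j
      by (induction j) (use card_factors_pos[OF bin] in \<open>auto simp: Suc_le_eq not_le\<close>)
    thus False using assms(2) by fastforce
  qed
  thus ?thesis using card_factors_le_if_stall[OF bin] by blast
qed

section \<open>Sturmian words\<close>

locale sturmian_word =
  fixes w :: "nat \<Rightarrow> nat"
  assumes sturmian: "sturmian w"
begin

lemma binary: "binary_word w"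
  using sturmian by (simp add: sturmian_def)

lemma letter_cases: "w n = 0 \<or> w n = 1"
  using binary by (auto simp: binary_word_def)

lemma card_factors: "card (factors w k) = k + 1"
  using sturmian by (simp add: sturmian_def)

lemma no_eventual_period:
  assumes "a < b" shows "\<exists>n. w (n + a) \<noteq> w (n + b)"
proof (rule ccontr)
  assume "\<not> ?thesis"
  hence per: "w (n + a) = w (n + b)" for n by auto
  have early: "\<exists>k'<b. factor_at w k b = factor_at w k' b" for k
  proof (induction k rule: less_induct)
    case (less k)
    show ?case
    proof (cases "k < b")
      case False
      have "factor_at w k b = factor_at w (k - (b - a)) b"
        unfolding factor_at_eq_iff
      proof (intro allI impI)
        fix t
        have "k - b + t + a = k - (b - a) + t" "k - b + t + b = k + t" using False assms by auto
        thus "w (k + t) = w (k - (b - a) + t)" using per[of "k - b + t"] by metis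
      qed
      moreover have "k - (b - a) < k" using False assms by auto
      then obtain k' where "k' < b" "factor_at w (k - (b - a)) b = factor_at w k' b"
        using less by blast
      ultimately show ?thesis by auto
    qed blast
  qed
  have "factors w b \<subseteq> (\<lambda>k. factor_at w k b) ` {..<b}"
  proof
    fix u assume "u \<in> factors w b"
    then obtain k where "u = factor_at w k b" by (auto simp: factors_def)
    thus "u \<in> (\<lambda>k. factor_at w k b) ` {..<b}" using early[of k] by auto
  qed
  hence "card (factors w b) \<le> card ((\<lambda>k. factor_at w k b) ` {..<b})"
    by (intro card_mono) auto
  also have "\<dots> \<le> b"
    using card_image_le[of "{..<b}" "\<lambda>k. factor_at w k b"] by simp
  finally show False using card_factors by simp
qed

text \<open>If the prefix of length K never recurred, the tail of w would have complexity at
  most K at length K, hence bounded complexity; but w has at most one more factor of each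
  length than its tail.\<close>

lemma prefix_recurs: "\<exists>s\<ge>1. factor_at w s K = factor_at w 0 K"
proof (rule ccontr)
  assume "\<not> ?thesis"
  hence no_return: "s \<ge> 1 \<Longrightarrow> factor_at w s K \<noteq> factor_at w 0 K" for s by auto
  define x where "x = shift w"
  have bin_x: "binary_word x" using binary by (auto simp: binary_word_def x_def shift_def)
  have factor_x: "factor_at x i m = factor_at w (Suc i) m" for i m
    by (simp add: factor_at_eq_iff x_def shift_def)
  have factors_w: "factors w m \<subseteq> insert (factor_at w 0 m) (factors x m)" for m
  proof
    fix u assume "u \<in> factors w m"
    then obtain i where "u = factor_at w i m" by (auto simp: factors_def)
    thus "u \<in> insert (factor_at w 0 m) (factors x m)"
      by (cases i) (auto simp: factors_def factor_x)
  qed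
  have "factors x K \<subseteq> factors w K - {factor_at w 0 K}"
    using no_return by (auto simp: factors_def factor_x)
  hence "card (factors x K) \<le> card (factors w K - {factor_at w 0 K})"
    by (intro card_mono) (auto simp: finite_factors[OF binary])
  also have "\<dots> = K"
  proof -
    have "factor_at w 0 K \<in> factors w K" by (auto simp: factors_def)
    thus ?thesis using card_factors[of K] by (simp add: card_Diff_singleton)
  qed
  finally obtain B where B: "\<And>m. card (factors x m) \<le> B" using morse_hedlund[OF bin_x] by blast
  have "card (factors w (B + 1)) \<le> card (insert (factor_at w 0 (B + 1)) (factors x (B + 1)))"
    by (intro card_mono factors_w) (simp add: finite_factors[OF bin_x])
  also have "\<dots> \<le> Suc (card (factors x (B + 1)))"
    by (simp add: card_insert_if finite_factors[OF bin_x])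
  finally show False using B[of "B + 1"] card_factors[of "B + 1"] by simp
qed

lemma factor_recurs: "\<exists>s\<ge>N. factor_at w s k = factor_at w i k"
proof (induction N)
  case (Suc N)
  then obtain s where s: "s \<ge> N" "factor_at w s k = factor_at w i k" by blast
  obtain r where r: "r \<ge> 1" "factor_at w r (s + k) = factor_at w 0 (s + k)"
    using prefix_recurs by blast
  have "factor_at w (r + s) k = factor_at w s k"
    using r(2) by (auto simp: factor_at_eq_iff add.assoc)
  thus ?case using s r by (intro exI[of _ "r + s"]) auto
qed blast

lemma right_special_unique:
  assumes "factor_at w i k = factor_at w i' k" "w (i + k) \<noteq> w (i' + k)"
    and "factor_at w j k = factor_at w j' k" "w (j + k) \<noteq> w (j' + k)"
  shows "factor_at w i k = factor_at w j k"
proof (rule ccontr)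
  assume ne: "factor_at w i k \<noteq> factor_at w j k"
  have distinct: "factor_at w p (Suc k) \<noteq> factor_at w p' (Suc k)"
    if "w (p + k) \<noteq> w (p' + k)" for p p'
    using that unfolding factor_at_eq_iff by auto
  have "card (take k ` factors w (Suc k)) + 2 \<le> card (factors w (Suc k))"
    by (rule card_image_add_two_le[where a' = "factor_at w i' (Suc k)"
          and b = "factor_at w j (Suc k)" and b' = "factor_at w j' (Suc k)",
          OF finite_factors[OF binary]])
      (use assms ne distinct in \<open>auto simp: factors_def take_factor_at\<close>)
  thus False using card_factors[of k] card_factors[of "Suc k"] by (simp add: factors_take)
qed

lemma tl_factors: "tl ` factors w (Suc k) = factors w k"
proof
  show "tl ` factors w (Suc k) \<subseteq> factors w k" by (auto simp: factors_def tl_factor_at)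
  show "factors w k \<subseteq> tl ` factors w (Suc k)"
  proof
    fix u assume "u \<in> factors w k"
    then obtain i where "u = factor_at w i k" by (auto simp: factors_def)
    moreover obtain s where "s \<ge> 1" "factor_at w s k = factor_at w i k" using factor_recurs by blast
    ultimately have "u = tl (factor_at w (s - 1) (Suc k))" by (simp add: tl_factor_at)
    thus "u \<in> tl ` factors w (Suc k)" by (auto simp: factors_def)
  qed
qed

lemma left_special_unique:
  assumes "factor_at w (Suc i) k = factor_at w (Suc i') k" "w i \<noteq> w i'"
    and "factor_at w (Suc j) k = factor_at w (Suc j') k" "w j \<noteq> w j'"
  shows "factor_at w (Suc i) k = factor_at w (Suc j) k"
proof (rule ccontr)
  assume ne: "factor_at w (Suc i) k \<noteq> factor_at w (Suc j) k"
  have distinct: "factor_at w p (Suc k) \<noteq> factor_at w p' (Suc k)" if "w p \<noteq> w p'" for p p'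
    using that unfolding factor_at_Suc by auto
  have "card (tl ` factors w (Suc k)) + 2 \<le> card (factors w (Suc k))"
    by (rule card_image_add_two_le[where a' = "factor_at w i' (Suc k)"
          and b = "factor_at w j (Suc k)" and b' = "factor_at w j' (Suc k)",
          OF finite_factors[OF binary]])
      (use assms ne distinct in \<open>auto simp: factors_def tl_factor_at\<close>)
  thus False using card_factors[of k] card_factors[of "Suc k"] by (simp add: tl_factors)
qed

abbreviation \<Omega> :: "(nat \<Rightarrow> nat) set" where
  "\<Omega> \<equiv> orbit_closure w"

lemma orbit_closure_factor: "x \<in> \<Omega> \<Longrightarrow> \<exists>i. factor_at w i k = factor_at x j k"
proof -
  assume "x \<in> \<Omega>"
  then obtain i where i: "factor_at w i (j + k) = factor_at x 0 (j + k)"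
    by (auto simp: orbit_closure_iff)
  have "factor_at w (i + j) k = factor_at x j k"
    using i by (auto simp: factor_at_eq_iff add.assoc)
  thus ?thesis by blast
qed

lemma orbit_closure_letter:
  assumes "x \<in> \<Omega>" shows "x n = 0 \<or> x n = 1"
proof -
  obtain i where "factor_at w i 1 = factor_at x n 1"
    using orbit_closure_factor[OF assms] by blast
  hence "w i = x n" by (simp add: factor_at_eq_iff)
  thus ?thesis using letter_cases[of i] by simp
qed

lemma orbit_closure_shift:
  assumes "x \<in> \<Omega>" shows "(shift ^^ m) x \<in> \<Omega>"
  unfolding orbit_closure_iff
proof
  fix k
  obtain i where "factor_at w i k = factor_at x m k"
    using orbit_closure_factor[OF assms] by blast
  hence "factor_at w i k = factor_at ((shift ^^ m) x) 0 k"
    by (simp add: factor_at_eq_iff funpow_shift add.commute)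
  thus "\<exists>i. factor_at w i k = factor_at ((shift ^^ m) x) 0 k" ..
qed

lemma word_in_orbit_closure: "w \<in> \<Omega>"
  unfolding orbit_closure_iff by blast

lemma shift_word_in_orbit_closure: "(shift ^^ m) w \<in> \<Omega>"
  by (rule orbit_closure_shift[OF word_in_orbit_closure])

lemma orbit_closure_extend_left:
  assumes "x \<in> \<Omega>" shows "\<exists>c. (\<lambda>n. if n = 0 then c else x (n - 1)) \<in> \<Omega>"
proof -
  define P where "P c k \<longleftrightarrow> (\<exists>i. factor_at w i (Suc k) = c # factor_at x 0 k)" for c k
  have P_some: "\<exists>c. P c k" for k
  proof -
    obtain i where "factor_at w i k = factor_at x 0 k" using assms orbit_closure_factor by blast
    then obtain s where s: "s \<ge> 1" "factor_at w s k = factor_at x 0 k"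
      using factor_recurs[of 1 k i] by auto
    hence "factor_at w (s - 1) (Suc k) = w (s - 1) # factor_at x 0 k"
      by (simp add: factor_at_Suc)
    thus ?thesis unfolding P_def by blast
  qed
  have P_mono: "P c k" if P: "P c k'" and le: "k \<le> k'" for c k k'
  proof -
    obtain i where i: "factor_at w i (Suc k') = c # factor_at x 0 k'"
      using P unfolding P_def by blast
    have "factor_at w i (Suc k) = take (Suc k) (factor_at w i (Suc k'))"
      using le by (simp add: take_factor_at)
    also have "\<dots> = c # factor_at x 0 k"
      using i le by (simp add: take_factor_at)
    finally show ?thesis unfolding P_def by blast
  qed
  have "\<exists>c. \<forall>k. P c k"
  proof (rule ccontr)
    assume "\<not> ?thesis"
    then obtain k0 k1 where "\<not> P 0 k0" "\<not> P 1 k1" by blast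
    hence "\<not> P 0 (max k0 k1)" "\<not> P 1 (max k0 k1)"
      using P_mono[of 0 "max k0 k1" k0] P_mono[of 1 "max k0 k1" k1] by auto
    moreover obtain c i where "factor_at w i (Suc (max k0 k1)) = c # factor_at x 0 (max k0 k1)"
      using P_some unfolding P_def by blast
    moreover from this have "c = 0 \<or> c = 1" using letter_cases[of i] by (simp add: factor_at_Suc)
    ultimately show False unfolding P_def by blast
  qed
  then obtain c where c: "\<forall>k. P c k" by blast
  have "\<exists>i. factor_at w i k = factor_at (\<lambda>n. if n = 0 then c else x (n - 1)) 0 k" for k
  proof (cases k)
    case (Suc k')
    have "factor_at (\<lambda>n. if n = 0 then c else x (n - 1)) 0 (Suc k') = c # factor_at x 0 k'"
      by (simp add: factor_at_Suc factor_at_eq_iff)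
    thus ?thesis using c Suc unfolding P_def by auto
  qed (simp add: factor_at_def)
  thus ?thesis unfolding orbit_closure_iff by blast
qed

section \<open>Balance\<close>

definition weight :: "nat \<Rightarrow> nat \<Rightarrow> nat" where
  "weight i m = (\<Sum>t<m. w (i + t))"

lemma weight_0 [simp]: "weight i 0 = 0"
  by (simp add: weight_def)

lemma weight_Suc: "weight i (Suc m) = weight i m + w (i + m)"
  by (simp add: weight_def)

lemma weight_Suc_front: "weight i (Suc m) = w i + weight (Suc i) m"
  unfolding weight_def by (subst sum.lessThan_Suc_shift) simp

lemma weight_add: "weight i (k + m) = weight i k + weight (i + k) m"
  by (induction m) (simp_all add: weight_Suc add.assoc)

lemma weight_frame: "weight i (Suc (Suc k)) = w i + weight (Suc i) k + w (Suc i + k)"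
  by (simp only: weight_Suc_front[of i "Suc k"] weight_Suc[of "Suc i" k] add.assoc)

lemma weight_le: "weight i m \<le> m"
proof (induction m)
  case (Suc m)
  thus ?case using letter_cases[of "i + m"] by (auto simp: weight_Suc)
qed simp

lemma weight_eq: "factor_at w i m = factor_at w j m \<Longrightarrow> weight i m = weight j m"
  unfolding weight_def factor_at_eq_iff by (intro sum.cong) auto

lemma weight_mirror:
  assumes "\<And>t. t < m \<Longrightarrow> w (i + t) = w (j + (m - 1 - t))"
  shows "weight i m = weight j m"
proof -
  have "weight i m = (\<Sum>t<m. w (j + (m - Suc t)))"
    unfolding weight_def using assms by (intro sum.cong) auto
  also have "\<dots> = weight j m"
    unfolding weight_def by (rule sum.nat_diff_reindex)
  finally show ?thesis .
qed

definition unbalanced :: "nat \<Rightarrow> bool" where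
  "unbalanced n \<longleftrightarrow> (\<exists>i j. w i = 0 \<and> w (Suc i + n) = 0 \<and> w j = 1 \<and> w (Suc j + n) = 1 \<and>
     factor_at w (Suc i) n = factor_at w (Suc j) n)"

lemma first_difference:
  assumes "factor_at w i L \<noteq> factor_at w j L"
  obtains k where "k < L" "w (i + k) \<noteq> w (j + k)" "\<And>t. t < k \<Longrightarrow> w (i + t) = w (j + t)"
proof -
  obtain k where "k < L \<and> w (i + k) \<noteq> w (j + k)"
    "\<forall>t<k. \<not> (t < L \<and> w (i + t) \<noteq> w (j + t))"
    using assms exists_least_iff[of "\<lambda>k. k < L \<and> w (i + k) \<noteq> w (j + k)"]
    by (auto simp: factor_at_eq_iff)
  thus ?thesis using that by auto
qed

text \<open>Between 0u0 and 1u'1 with u' at least as heavy as u, either the first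
  difference of u and u' is a 0 against a 1, giving a shorter unbalanced pair, or it is a
  1 against a 0 and the weight gap reappears after it.\<close>

lemma unbalanced_or_gap_of_frames:
  assumes "w i = 0" "w (Suc i + L) = 0" "w j = 1" "w (Suc j + L) = 1"
    and "weight (Suc i) L \<le> weight (Suc j) L"
  shows "(\<exists>n\<le>L. unbalanced n) \<or> (\<exists>i' j' m. m \<le> L \<and> weight i' m + 2 \<le> weight j' m)"
proof (cases "factor_at w (Suc i) L = factor_at w (Suc j) L")
  case True
  thus ?thesis using assms(1-4) unfolding unbalanced_def by blast
next
  case False
  then obtain k where k: "k < L" "w (Suc i + k) \<noteq> w (Suc j + k)"
    and same: "\<And>t. t < k \<Longrightarrow> w (Suc i + t) = w (Suc j + t)"
    using first_difference[OF False] by blast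
  show ?thesis
  proof (cases "w (Suc i + k) = 0")
    case True
    hence "w (Suc j + k) = 1" using k(2) letter_cases[of "Suc j + k"] by auto
    hence "unbalanced k"
      unfolding unbalanced_def using assms(1,3) True same by (auto simp: factor_at_eq_iff)
    thus ?thesis using k(1) by auto
  next
    case False
    hence letters: "w (Suc i + k) = 1" "w (Suc j + k) = 0"
      using k(2) letter_cases[of "Suc i + k"] letter_cases[of "Suc j + k"] by auto
    define R where "R = L - Suc k"
    have L: "L = k + Suc R" using k(1) by (simp add: R_def)
    have "weight (Suc i) k = weight (Suc j) k"
      using same by (intro weight_eq) (simp add: factor_at_eq_iff)
    moreover have "weight (Suc i) L = weight (Suc i) k + 1 + weight (Suc (Suc i + k)) R"
      "weight (Suc j) L = weight (Suc j) k + weight (Suc (Suc j + k)) R"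
      using letters unfolding L weight_add weight_Suc_front by simp_all
    moreover have "weight (Suc (Suc i + k)) (Suc R) = weight (Suc (Suc i + k)) R"
      "weight (Suc (Suc j + k)) (Suc R) = weight (Suc (Suc j + k)) R + 1"
      using assms(2,4) unfolding L weight_Suc by (simp_all add: add.assoc)
    ultimately have "weight (Suc (Suc i + k)) (Suc R) + 2 \<le> weight (Suc (Suc j + k)) (Suc R)"
      using assms(5) by linarith
    thus ?thesis using L by auto
  qed
qed

lemma unbalanced_of_weight_gap:
  "weight i m + 2 \<le> weight j m \<Longrightarrow> \<exists>n. n + 2 \<le> m \<and> unbalanced n"
proof (induction m arbitrary: i j rule: less_induct)
  case (less m)
  have "2 \<le> m" using less.prems weight_le[of j m] by linarith
  then obtain L where m: "m = Suc (Suc L)" by (metis add_2_eq_Suc le_Suc_ex)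
  consider "w i = 1 \<or> w j = 0" | "w (Suc i + L) = 1 \<or> w (Suc j + L) = 0"
    | "w i = 0" "w (Suc i + L) = 0" "w j = 1" "w (Suc j + L) = 1"
    using letter_cases[of i] letter_cases[of j] letter_cases[of "Suc i + L"]
      letter_cases[of "Suc j + L"]
    by fastforce
  thus ?case
  proof cases
    case 1
    hence "weight (Suc i) (Suc L) + 2 \<le> weight (Suc j) (Suc L)"
      using less.prems letter_cases[of i] letter_cases[of j] unfolding m weight_Suc_front by auto
    then obtain n where "n + 2 \<le> Suc L" "unbalanced n" using less.IH[of "Suc L"] m by blast
    thus ?thesis using m le_SucI by blast
  next
    case 2
    hence "weight i (Suc L) + 2 \<le> weight j (Suc L)"
      using less.prems letter_cases[of "Suc i + L"] letter_cases[of "Suc j + L"]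
      unfolding m weight_Suc by auto
    then obtain n where "n + 2 \<le> Suc L" "unbalanced n" using less.IH[of "Suc L"] m by blast
    thus ?thesis using m le_SucI by blast
  next
    case 3
    hence "weight (Suc i) L \<le> weight (Suc j) L"
      using less.prems unfolding m weight_frame by simp
    from unbalanced_or_gap_of_frames[OF 3 this] show ?thesis
    proof
      assume "\<exists>n\<le>L. unbalanced n"
      then obtain n where "n \<le> L" "unbalanced n" by blast
      thus ?thesis using m by (intro exI[of _ n]) simp
    next
      assume "\<exists>i' j' m'. m' \<le> L \<and> weight i' m' + 2 \<le> weight j' m'"
      then obtain i' j' m' where "m' \<le> L" "weight i' m' + 2 \<le> weight j' m'" by blast
      then obtain n where "n + 2 \<le> m'" "unbalanced n" using less.IH[of m' i' j'] m by auto
      thus ?thesis using \<open>m' \<le> L\<close> m by (metis add_le_mono1 le_SucI le_trans)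
    qed
  qed
qed

end

text \<open>A shortest v with 0v0 and 1v1 both factors, occurring at i0 and j0. Then v is a
  palindrome and the unique right special factor of length n; comparing the returns to v
  after v0 and after v1 leads to a contradiction, so Sturmian words are balanced.\<close>

locale minimal_unbalanced = sturmian_word +
  fixes n i0 j0 :: nat
  assumes minimal: "\<And>n'. n' < n \<Longrightarrow> \<not> unbalanced n'"
    and i0_zero: "w i0 = 0" and v_followed_i0: "w (Suc i0 + n) = 0"
    and j0_one: "w j0 = 1" and v_followed_j0: "w (Suc j0 + n) = 1"
    and v_at_j0: "factor_at w (Suc i0) n = factor_at w (Suc j0) n"
begin

abbreviation v_letter :: "nat \<Rightarrow> nat" where
  "v_letter t \<equiv> w (Suc i0 + t)"

lemma v_letter_at_j0: "t < n \<Longrightarrow> w (Suc j0 + t) = v_letter t"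
  using v_at_j0 unfolding factor_at_eq_iff by simp

text \<open>Otherwise, with k the first position where v and its reversal differ, the
  windows 0 v[0..k] at i0 and v[n-1-k..n-1] 1 after j0 (or 1 v[0..k] at j0 and
  v[n-1-k..n-1] 0 after i0) have weights differing by 2 and length k + 2 < n + 2.\<close>

lemma v_palindrome: "t < n \<Longrightarrow> v_letter t = v_letter (n - 1 - t)"
proof (rule ccontr)
  assume "t < n" "v_letter t \<noteq> v_letter (n - 1 - t)"
  then obtain k where k: "k < n" "v_letter k \<noteq> v_letter (n - 1 - k)"
    and pre: "\<And>t. t < k \<Longrightarrow> v_letter t = v_letter (n - 1 - t)"
    using exists_least_iff[of "\<lambda>t. t < n \<and> v_letter t \<noteq> v_letter (n - 1 - t)"] by (metis less_trans)
  have short: "k < n - 1 - k"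
  proof (rule ccontr)
    assume "\<not> k < n - 1 - k"
    hence "n - 1 - k < k" using k(2) by (metis le_neq_implies_less not_less)
    thus False using pre[of "n - 1 - k"] k by (simp add: diff_diff_cancel)
  qed
  define S where "S = weight (Suc i0) k"
  have S_end: "weight (Suc (q + (n - k))) k = S" if "\<And>t. t < n \<Longrightarrow> w (Suc q + t) = v_letter t" for q
    unfolding S_def
  proof (rule weight_mirror)
    fix t assume "t < k"
    hence "w (Suc (q + (n - k)) + t) = v_letter (n - 1 - (k - 1 - t))"
      using that[of "n - k + t"] short by (simp add: add.assoc)
    thus "w (Suc (q + (n - k)) + t) = w (Suc i0 + (k - 1 - t))"
      using pre[of "k - 1 - t"] \<open>t < k\<close> by simp
  qed
  have ends: "Suc i0 + (n - 1 - k) = i0 + (n - k)" "Suc j0 + (n - 1 - k) = j0 + (n - k)"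
    "Suc (i0 + (n - k)) + k = Suc i0 + n" "Suc (j0 + (n - k)) + k = Suc j0 + n"
    using short by auto
  have "weight (Suc j0) k = S"
    unfolding S_def using v_letter_at_j0 k(1) by (intro weight_eq) (simp add: factor_at_eq_iff)
  hence weights: "weight i0 (Suc (Suc k)) = S + v_letter k"
    "weight j0 (Suc (Suc k)) = 1 + S + v_letter k"
    "weight (i0 + (n - k)) (Suc (Suc k)) = v_letter (n - 1 - k) + S"
    "weight (j0 + (n - k)) (Suc (Suc k)) = v_letter (n - 1 - k) + S + 1"
    unfolding weight_frame S_def
    using i0_zero j0_one v_followed_i0 v_followed_j0 v_letter_at_j0[of k] v_letter_at_j0[of "n - 1 - k"]
      k(1) short
      S_end[of i0] S_end[of j0] v_letter_at_j0 ends by (simp_all add: S_def)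
  have "v_letter k = 0 \<and> v_letter (n - 1 - k) = 1 \<or> v_letter k = 1 \<and> v_letter (n - 1 - k) = 0"
    using k(2) letter_cases[of "Suc i0 + k"] letter_cases[of "Suc i0 + (n - 1 - k)"] by auto
  then obtain n' where "n' + 2 \<le> Suc (Suc k)" "unbalanced n'"
    using unbalanced_of_weight_gap[of i0 "Suc (Suc k)" "j0 + (n - k)"]
      unbalanced_of_weight_gap[of "i0 + (n - k)" "Suc (Suc k)" j0] weights by auto
  thus False using minimal short by auto
qed

definition v_occurs :: "nat \<Rightarrow> bool" where
  "v_occurs k \<longleftrightarrow> factor_at w k n = factor_at w (Suc i0) n"

lemma v_occurs_i0: "v_occurs (Suc i0)" and v_occurs_j0: "v_occurs (Suc j0)"
  using v_at_j0 by (auto simp: v_occurs_def)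

lemma v_occurs_nth: "v_occurs k \<Longrightarrow> t < n \<Longrightarrow> w (k + t) = v_letter t"
  unfolding v_occurs_def factor_at_eq_iff by simp

lemma next_letter_determined:
  "factor_at w k n = factor_at w k' n \<Longrightarrow> \<not> v_occurs k \<Longrightarrow> w (k + n) = w (k' + n)"
proof (rule ccontr)
  assume h: "factor_at w k n = factor_at w k' n" "\<not> v_occurs k" "w (k + n) \<noteq> w (k' + n)"
  have "factor_at w k n = factor_at w (Suc i0) n"
    by (rule right_special_unique[OF h(1) h(3) v_at_j0]) (use v_followed_i0 v_followed_j0 in simp)
  thus False using h(2) by (simp add: v_occurs_def)
qed

lemma v_recurs: "\<exists>k\<ge>N. v_occurs k"
  using factor_recurs[of N n "Suc i0"] by (auto simp: v_occurs_def)

definition next_v :: "nat \<Rightarrow> nat" where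
  "next_v k = (LEAST k'. k < k' \<and> v_occurs k')"

lemma next_v_ex: "\<exists>k'. k < k' \<and> v_occurs k'"
proof -
  obtain k' where "k' \<ge> Suc k" "v_occurs k'" using v_recurs by blast
  thus ?thesis by (intro exI[of _ k']) auto
qed

lemma next_v_gt: "k < next_v k" and next_v_occurs: "v_occurs (next_v k)"
  using LeastI_ex[OF next_v_ex[of k]] unfolding next_v_def by auto

lemma next_v_min: "k < k' \<Longrightarrow> k' < next_v k \<Longrightarrow> \<not> v_occurs k'"
  using not_less_Least unfolding next_v_def by blast

lemma next_v_eq: "k < k' \<Longrightarrow> v_occurs k' \<Longrightarrow> (\<And>q. k < q \<Longrightarrow> q < k' \<Longrightarrow> \<not> v_occurs q) \<Longrightarrow> next_v k = k'"
  unfolding next_v_def by (rule Least_equality) (auto simp: not_less[symmetric])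

lemma agree_while_no_v:
  assumes "factor_at w p n = factor_at w p' n" "\<And>u. u < m \<Longrightarrow> \<not> v_occurs (p + u)"
  shows "u < m + n \<Longrightarrow> w (p + u) = w (p' + u)"
  using assms(2)
proof (induction m arbitrary: u)
  case 0 thus ?case using assms(1) unfolding factor_at_eq_iff by simp
next
  case (Suc m)
  have IH: "u < m + n \<Longrightarrow> w (p + u) = w (p' + u)" for u using Suc.IH Suc.prems(2) by auto
  show ?case
  proof (cases "u < m + n")
    case True thus ?thesis using IH by blast
  next
    case False
    hence u: "u = m + n" using Suc.prems(1) by simp
    have "factor_at w (p + m) n = factor_at w (p' + m) n"
      unfolding factor_at_eq_iff using IH by (simp add: add.assoc)
    from next_letter_determined[OF this Suc.prems(2)[of m]] show ?thesis
      unfolding u by (simp add: add.assoc)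
  qed
qed

lemma agree_until_next_v:
  assumes "v_occurs k" "v_occurs k'" "w (k + n) = w (k' + n)"
  shows "u < (next_v k - k) + n \<Longrightarrow> w (k + u) = w (k' + u)"
proof -
  assume u: "u < (next_v k - k) + n"
  have win: "factor_at w (Suc k) n = factor_at w (Suc k') n"
    unfolding factor_at_eq_iff
  proof (intro allI impI)
    fix t assume "t < n"
    show "w (Suc k + t) = w (Suc k' + t)"
    proof (cases "Suc t < n")
      case True
      thus ?thesis using v_occurs_nth[OF assms(1) True] v_occurs_nth[OF assms(2) True] by simp
    next
      case False hence "Suc t = n" using \<open>t < n\<close> by simp
      hence e1: "Suc k + t = k + n" and e2: "Suc k' + t = k' + n" by auto
      show ?thesis unfolding e1 e2 by (rule assms(3))
    qed
  qed
  have no: "\<not> v_occurs (Suc k + u')" if "u' < next_v k - k - 1" for u'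
    using next_v_min[of k "Suc k + u'"] that by auto
  show ?thesis
  proof (cases u)
    case 0
    show ?thesis
    proof (cases "0 < n")
      case True
      thus ?thesis using v_occurs_nth[OF assms(1) True] v_occurs_nth[OF assms(2) True] 0 by simp
    next
      case False thus ?thesis using assms(3) 0 by simp
    qed
  next
    case (Suc u')
    have "u' < (next_v k - k - 1) + n" using u Suc next_v_gt[of k] by simp
    from agree_while_no_v[OF win no this] show ?thesis using Suc by simp
  qed
qed

lemma next_v_gap_eq:
  assumes "v_occurs k" "v_occurs k'" "w (k + n) = w (k' + n)"
  shows "next_v k - k = next_v k' - k'"
proof -
  have le: "next_v b - b \<le> next_v a - a"
    if ab: "v_occurs a" "v_occurs b" "w (a + n) = w (b + n)" for a b
  proof -
    have agree: "w (a + u) = w (b + u)" if "u < (next_v a - a) + n" for u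
      using agree_until_next_v[OF ab] that by blast
    have "v_occurs (b + (next_v a - a))"
    proof -
      have "factor_at w (b + (next_v a - a)) n = factor_at w (next_v a) n"
        unfolding factor_at_eq_iff
      proof (intro allI impI)
        fix t assume "t < n"
        have "w (a + ((next_v a - a) + t)) = w (b + ((next_v a - a) + t))"
          by (rule agree) (use \<open>t < n\<close> in simp)
        moreover have "a + ((next_v a - a) + t) = next_v a + t" using next_v_gt[of a] by simp
        ultimately show "w (b + (next_v a - a) + t) = w (next_v a + t)" by (simp add: add.assoc)
      qed
      thus ?thesis using next_v_occurs[of a] by (simp add: v_occurs_def)
    qed
    moreover have "b < b + (next_v a - a)" using next_v_gt[of a] by simp
    ultimately have "\<not> (b + (next_v a - a) < next_v b)" using next_v_min by blast
    thus ?thesis by simp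
  qed
  show ?thesis using le[OF assms] le[OF assms(2,1) assms(3)[symmetric]] by simp
qed

text \<open>anchor c is an occurrence of v followed by c. By next_v_gap_eq, every occurrence of vc
  returns to v after gap c steps, and the letter just before the return is last_letter c.\<close>

definition anchor :: "nat \<Rightarrow> nat" where
  "anchor c = (if c = 0 then Suc i0 else Suc j0)"

definition gap :: "nat \<Rightarrow> nat" where
  "gap c = next_v (anchor c) - anchor c"

definition last_letter :: "nat \<Rightarrow> nat" where
  "last_letter c = w (next_v (anchor c) - 1)"

lemma anchor_v: "v_occurs (anchor c)"
  by (simp add: anchor_def v_occurs_i0 v_occurs_j0)

lemma anchor_followed: "c = 0 \<or> c = 1 \<Longrightarrow> w (anchor c + n) = c"
  using v_followed_i0 v_followed_j0 by (auto simp: anchor_def)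

lemma gap_pos: "gap c \<ge> 1"
  using next_v_gt[of "anchor c"] by (simp add: gap_def)

lemma next_v_anchor: "next_v (anchor c) = anchor c + gap c"
  using next_v_gt[of "anchor c"] by (simp add: gap_def)

lemma next_v_by_letter:
  assumes "v_occurs k" "w (k + n) = c" "c = 0 \<or> c = 1"
  shows "next_v k = k + gap c" "w (next_v k - 1) = last_letter c"
proof -
  have o: "w (k + n) = w (anchor c + n)" using assms anchor_followed by simp
  have e: "next_v k - k = gap c" using next_v_gap_eq[OF assms(1) anchor_v o] by (simp add: gap_def)
  thus "next_v k = k + gap c" using next_v_gt[of k] by simp
  have "w (k + (gap c - 1)) = w (anchor c + (gap c - 1))"
    using agree_until_next_v[OF assms(1) anchor_v o, of "gap c - 1"] e gap_pos[of c] by simp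
  moreover have "k + (gap c - 1) = next_v k - 1" "anchor c + (gap c - 1) = next_v (anchor c) - 1"
    using e gap_pos[of c] next_v_gt[of k] next_v_anchor[of c] by auto
  ultimately show "w (next_v k - 1) = last_letter c" by (simp add: last_letter_def)
qed

lemma last_letter_cases: "last_letter c = 0 \<or> last_letter c = 1"
  unfolding last_letter_def by (rule letter_cases)

lemma last_letters_differ: "last_letter 0 \<noteq> last_letter 1"
proof
  assume eq: "last_letter 0 = last_letter 1"
  have claim: "w (k2 - 1) = last_letter 0" if "v_occurs k2" "Suc i0 < k2" for k2
  proof -
    define A where "A = {q. Suc i0 \<le> q \<and> q < k2 \<and> v_occurs q}"
    have fin: "finite A" unfolding A_def by (rule finite_subset[of _ "{..<k2}"]) auto
    have ne: "Suc i0 \<in> A" using that v_occurs_i0 unfolding A_def by simp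
    define p where "p = Max A"
    have pA: "p \<in> A" unfolding p_def using fin ne Max_in by blast
    have pmax: "q \<in> A \<Longrightarrow> q \<le> p" for q unfolding p_def using fin Max_ge by blast
    have "next_v p = k2"
    proof (rule next_v_eq)
      show "p < k2" using pA unfolding A_def by simp
      show "v_occurs k2" by fact
      fix q assume "p < q" "q < k2"
      thus "\<not> v_occurs q" using pmax[of q] pA unfolding A_def by fastforce
    qed
    moreover have "v_occurs p" using pA unfolding A_def by simp
    ultimately show ?thesis
      using next_v_by_letter(2)[of p "w (p + n)"] letter_cases[of "p + n"] eq by auto
  qed
  obtain p0 where p0: "w p0 = 1 - last_letter 0" "v_occurs (Suc p0)"
  proof (cases "last_letter 0 = 0")
    case True thus ?thesis using that[of j0] j0_one v_occurs_j0 by simp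
  next
    case False hence "last_letter 0 = 1" using last_letter_cases[of 0] by simp
    thus ?thesis using that[of i0] i0_zero v_occurs_i0 by simp
  qed
  obtain s where s: "s \<ge> Suc i0" "factor_at w s (Suc n) = factor_at w p0 (Suc n)"
    using factor_recurs by blast
  have "w s = w p0" "factor_at w (Suc s) n = factor_at w (Suc p0) n"
    using s(2) unfolding factor_at_Suc by auto
  hence "v_occurs (Suc s)" "w s = 1 - last_letter 0" using p0 by (auto simp: v_occurs_def)
  moreover have "w (Suc s - 1) = last_letter 0"
    using claim[of "Suc s"] \<open>v_occurs (Suc s)\<close> s(1) by simp
  ultimately show False using last_letter_cases[of 0] by auto
qed

lemma last_letter_short_gap: assumes "c = 0 \<or> c = 1" "gap c \<le> n + 1" shows "last_letter c = c"
proof -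
  let ?k = "anchor c"
  have nk: "next_v ?k = ?k + gap c" by (rule next_v_anchor)
  have lc: "last_letter c = w (?k + (gap c - 1))"
    unfolding last_letter_def nk using gap_pos[of c] by (simp add: add.commute)
  show ?thesis
  proof (cases "gap c = n + 1")
    case True thus ?thesis using lc anchor_followed[OF assms(1)] by simp
  next
    case False
    hence a: "gap c \<le> n" using assms(2) by simp
    have o2: "v_occurs (?k + gap c)" using next_v_occurs[of ?k] nk by simp
    have "?k + gap c + (n - gap c) = ?k + n" using a by simp
    hence "c = w (?k + gap c + (n - gap c))" using anchor_followed[OF assms(1)] by simp
    also have "\<dots> = v_letter (n - gap c)" by (rule v_occurs_nth[OF o2]) (use gap_pos[of c] a in simp)
    finally have c: "c = v_letter (n - gap c)" .
    have "last_letter c = w (?k + (gap c - 1))" by (rule lc)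
    also have "\<dots> = v_letter (gap c - 1)" by (rule v_occurs_nth[OF anchor_v]) (use gap_pos[of c] a in simp)
    also have "\<dots> = v_letter (n - 1 - (gap c - 1))"
      using v_palindrome[of "gap c - 1"] gap_pos[of c] a by simp
    also have "n - 1 - (gap c - 1) = n - gap c" using gap_pos[of c] a by simp
    finally show ?thesis using c by simp
  qed
qed

lemma no_v_within_gap: "0 < t \<Longrightarrow> t < gap c \<Longrightarrow> \<not> v_occurs (anchor c + t)"
  using next_v_min[of "anchor c" "anchor c + t"] next_v_anchor[of c] by simp

lemma factor_agree_while_no_v: 
  assumes "factor_at w p n = factor_at w p' n" "\<And>u. u < m \<Longrightarrow> \<not> v_occurs (p + u)"
  shows "factor_at w (p + m) n = factor_at w (p' + m) n"
  unfolding factor_at_eq_iff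
proof (intro allI impI)
  fix t assume "t < n"
  have "m + t < m + n" using \<open>t < n\<close> by simp
  from agree_while_no_v[OF assms this] have "w (p + (m + t)) = w (p' + (m + t))" .
  thus "w (p + m + t) = w (p' + m + t)" by (simp add: add.assoc)
qed

lemma last_letter_eq: "last_letter c = w (anchor c + gap c - 1)"
  unfolding last_letter_def next_v_anchor ..

lemma factors_distinct_within_gap:
  assumes "t < t'" "t' < gap c" "factor_at w (anchor c + t) n = factor_at w (anchor c + t') n"
  shows False
proof (cases "t = 0")
  case True
  have "v_occurs (anchor c + t')" using assms(3) anchor_v True by (simp add: v_occurs_def)
  thus False using no_v_within_gap[of t' c] assms by simp
next
  case False
  let ?m = "gap c - t'"
  have no: "\<not> v_occurs (anchor c + t + u)" if "u < ?m" for u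
    using no_v_within_gap[of "t + u" c] that False assms by (simp add: add.assoc)
  have "factor_at w (anchor c + t + ?m) n = factor_at w (anchor c + t' + ?m) n"
    by (rule factor_agree_while_no_v[OF assms(3) no])
  moreover have "anchor c + t' + ?m = next_v (anchor c)" using next_v_anchor[of c] assms by simp
  ultimately have "v_occurs (anchor c + t + ?m)"
    using next_v_occurs[of "anchor c"] by (simp add: v_occurs_def)
  moreover obtain q where q: "q = t + ?m" by blast
  ultimately have "v_occurs (anchor c + q)" by (simp add: add.assoc)
  moreover have "0 < q" "q < gap c" using q assms False by auto
  ultimately show False using no_v_within_gap by blast
qed

lemma factors_distinct_across_gaps:
  assumes "t < gap 0" "0 < s" "s < gap 1"
    and "factor_at w (anchor 0 + t) n = factor_at w (anchor 1 + s) n"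
  shows False
proof (cases "t = 0")
  case True
  have "v_occurs (anchor 1 + s)" using assms(4) anchor_v[of 0] True by (simp add: v_occurs_def)
  thus False using no_v_within_gap[of s 1] assms by simp
next
  case False
  let ?m0 = "gap 0 - t" and ?m1 = "gap 1 - s"
  show False
  proof (cases "?m0 \<le> ?m1")
    case True
    have no: "\<not> v_occurs (anchor 0 + t + u)" if "u < ?m0" for u
      using no_v_within_gap[of "t + u" 0] that False assms by (simp add: add.assoc)
    have eq: "factor_at w (anchor 0 + t + ?m0) n = factor_at w (anchor 1 + s + ?m0) n"
      by (rule factor_agree_while_no_v[OF assms(4) no])
    have "anchor 0 + t + ?m0 = next_v (anchor 0)" using next_v_anchor[of 0] assms by simp
    hence o: "v_occurs (anchor 1 + (s + ?m0))"
      using eq next_v_occurs[of "anchor 0"] by (simp add: v_occurs_def add.assoc)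
    show False
    proof (cases "s + ?m0 < gap 1")
      case True thus False using no_v_within_gap[of "s + ?m0" 1] o assms by simp
    next
      case False
      hence sm: "s + ?m0 = gap 1" using True assms by simp
      have "w (anchor 0 + t + (?m0 - 1)) = w (anchor 1 + s + (?m0 - 1))"
      proof -
        have "gap 0 - t - 1 < gap 0 - t + n" using assms(1) by arith
        from agree_while_no_v[where m = "gap 0 - t", OF assms(4) no this] show ?thesis .
      qed
      moreover have "anchor 0 + t + (?m0 - 1) = anchor 0 + gap 0 - 1" using assms \<open>t \<noteq> 0\<close> by simp
      moreover have "anchor 1 + s + (?m0 - 1) = anchor 1 + gap 1 - 1" using sm assms \<open>t \<noteq> 0\<close> by simp
      ultimately have "last_letter 0 = last_letter 1" unfolding last_letter_eq by simp
      thus False using last_letters_differ by simp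
    qed
  next
    case False2: False
    have no: "\<not> v_occurs (anchor 1 + s + u)" if "u < ?m1" for u
      using no_v_within_gap[of "s + u" 1] that assms by (simp add: add.assoc)
    have eq: "factor_at w (anchor 1 + s + ?m1) n = factor_at w (anchor 0 + t + ?m1) n"
      by (rule factor_agree_while_no_v[OF assms(4)[symmetric] no])
    have "anchor 1 + s + ?m1 = next_v (anchor 1)" using next_v_anchor[of 1] assms by simp
    hence o: "v_occurs (anchor 0 + t + ?m1)"
      using eq next_v_occurs[of "anchor 1"] by (simp add: v_occurs_def)
    obtain q where q: "q = t + ?m1" by blast
    have "v_occurs (anchor 0 + q)" using o q by (simp add: add.assoc)
    moreover have "0 < q" "q < gap 0" using q False2 False assms by auto
    ultimately show False using no_v_within_gap by blast
  qed
qed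

text \<open>The factors of length n at anchor 0 + t for t < gap 0 and at anchor 1 + s for
  0 < s < gap 1 are pairwise distinct, and there are only n + 1 of them.\<close>

lemma gaps_sum_le: "gap 0 + gap 1 \<le> n + 2"
proof -
  define N where "N = gap 0 + gap 1 - 1"
  define g where "g t = (if t < gap 0 then factor_at w (anchor 0 + t) n
    else factor_at w (anchor 1 + (t + 1 - gap 0)) n)" for t
  have inj_aux: "t1 < t2 \<Longrightarrow> t2 < N \<Longrightarrow> g t1 \<noteq> g t2" for t1 t2
  proof
    assume h: "t1 < t2" "t2 < N" "g t1 = g t2"
    show False
    proof (cases "t2 < gap 0")
      case True
      thus False using factors_distinct_within_gap[of t1 t2 0] h unfolding g_def by simp
    next
      case F2: False
      show False
      proof (cases "t1 < gap 0")
        case True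
        define s where "s = t2 + 1 - gap 0"
        have "g t2 = factor_at w (anchor 1 + s) n" using F2 unfolding g_def s_def by simp
        moreover have "g t1 = factor_at w (anchor 0 + t1) n" using True unfolding g_def by simp
        moreover have "0 < s" "s < gap 1" using F2 h unfolding s_def N_def by auto
        ultimately show False using factors_distinct_across_gaps[of t1 s] h True by simp
      next
        case False
        define s1 where "s1 = t1 + 1 - gap 0"
        define s2 where "s2 = t2 + 1 - gap 0"
        have "g t2 = factor_at w (anchor 1 + s2) n" using F2 unfolding g_def s2_def by simp
        moreover have "g t1 = factor_at w (anchor 1 + s1) n"
          using False unfolding g_def s1_def by simp
        moreover have "s1 < s2" "s2 < gap 1" using F2 False h unfolding s1_def s2_def N_def by auto
        ultimately show False using factors_distinct_within_gap[of s1 s2 1] h by simp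
      qed
    qed
  qed
  have "inj_on g {..<N}"
  proof (rule inj_onI)
    fix t1 t2 assume "t1 \<in> {..<N}" "t2 \<in> {..<N}" "g t1 = g t2"
    thus "t1 = t2" using inj_aux[of t1 t2] inj_aux[of t2 t1] by (metis lessThan_iff nat_neq_iff)
  qed
  hence "card (g ` {..<N}) = N" by (simp add: card_image)
  moreover have "g ` {..<N} \<subseteq> factors w n" by (auto simp: g_def factors_def)
  ultimately have "N \<le> card (factors w n)" using card_mono[OF finite_factors[OF binary]] by metis
  thus ?thesis using card_factors[of n] unfolding N_def by simp
qed

text \<open>If cv is always followed by c and the return from vc ends in c, then the returns
  repeat with period gap c from the first occurrence of cv onwards.\<close>

lemma letter_preserving_return_absurd:
  assumes c: "c = 0 \<or> c = 1" and lc: "last_letter c = c"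
    and noext: "\<And>p. w p = c \<Longrightarrow> v_occurs (Suc p) \<Longrightarrow> w (Suc p + n) = c"
    and p0: "w p0 = c" "v_occurs (Suc p0)"
  shows False
proof -
  let ?k = "Suc p0" and ?gap = "gap c"
  have returns: "v_occurs (?k + m * ?gap) \<and> w (?k + m * ?gap - 1) = c \<and> w (?k + m * ?gap + n) = c"
    for m
  proof (induction m)
    case 0 thus ?case using p0 noext by simp
  next
    case (Suc m)
    let ?km = "?k + m * ?gap"
    have o: "v_occurs ?km" and out: "w (?km + n) = c" using Suc by auto
    have e: "?k + Suc m * ?gap = ?km + ?gap" by simp
    have "next_v ?km = ?km + ?gap" "w (next_v ?km - 1) = last_letter c"
      using next_v_by_letter[OF o out c] by auto
    hence "v_occurs (?km + ?gap)" "w (?km + ?gap - 1) = c" using next_v_occurs[of ?km] lc by auto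
    hence o2: "v_occurs (?k + Suc m * ?gap)" and in2: "w (?k + Suc m * ?gap - 1) = c"
      unfolding e by auto
    have "?k + Suc m * ?gap = Suc (?k + Suc m * ?gap - 1)" by simp
    hence "w (?k + Suc m * ?gap + n) = c" using noext[of "?k + Suc m * ?gap - 1"] o2 in2 by simp
    thus ?case using o2 in2 by simp
  qed
  have per: "w (?k + t) = w (?k + ?gap + t)" for t
  proof -
    define m where "m = t div ?gap"
    define t' where "t' = t mod ?gap"
    have t: "t = m * ?gap + t'" unfolding m_def t'_def by simp
    have t'gap: "t' < ?gap" unfolding t'_def using gap_pos[of c] by simp
    let ?km = "?k + m * ?gap"
    have o: "v_occurs ?km" and out: "w (?km + n) = c" using returns[of m] by blast+
    have o': "v_occurs (?k + Suc m * ?gap)" and out': "w (?k + Suc m * ?gap + n) = c"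
      using returns[of "Suc m"] by blast+
    have nk: "next_v ?km = ?km + ?gap" using next_v_by_letter[OF o out c] by simp
    have "w (?km + t') = w (?k + Suc m * ?gap + t')"
      by (rule agree_until_next_v[OF o o']) (use out out' nk t'gap in simp_all)
    thus ?thesis unfolding t by (simp add: add.assoc add.commute add.left_commute)
  qed
  obtain q where "w (q + ?k) \<noteq> w (q + (?k + ?gap))"
    using no_eventual_period[of ?k "?k + ?gap"] gap_pos[of c] by auto
  thus False using per[of q] by (simp add: add.commute add.left_commute)
qed

text \<open>If the last letters are 1 and 0, both gaps exceed n + 1. Otherwise every letter c is
  somewhere followed by v(1 - c), so 0v1 and 1v0 occur, and 0v, 1v are both right special.\<close>

lemma minimal_unbalanced_false: False
proof (cases "last_letter 0 = 0")
  case False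
  hence "last_letter 0 = 1" "last_letter 1 = 0"
    using last_letter_cases[of 0] last_letter_cases[of 1] last_letters_differ by auto
  hence "n + 1 < gap 0" "n + 1 < gap 1"
    using last_letter_short_gap[of 0] last_letter_short_gap[of 1] by fastforce+
  thus False using gaps_sum_le by simp
next
  case True
  hence "last_letter 1 = 1"
    using last_letter_cases[of 1] last_letters_differ by auto
  have switch: "\<exists>p. w p = c \<and> v_occurs (Suc p) \<and> w (Suc p + n) = 1 - c"
    if lc: "last_letter c = c" and c: "c = 0 \<or> c = 1" for c
  proof (rule ccontr)
    assume "\<not> ?thesis"
    hence "w p = c \<Longrightarrow> v_occurs (Suc p) \<Longrightarrow> w (Suc p + n) = c" for p
      using letter_cases[of "Suc p + n"] c by auto
    moreover obtain p where "w p = c" "v_occurs (Suc p)"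
      using c i0_zero j0_one v_occurs_i0 v_occurs_j0 by auto
    ultimately show False using letter_preserving_return_absurd[of c] lc c by blast
  qed
  obtain p0 p1 where p0: "w p0 = 0" "v_occurs (Suc p0)" "w (Suc p0 + n) = 1"
    and p1: "w p1 = 1" "v_occurs (Suc p1)" "w (Suc p1 + n) = 0"
    using switch[of 0] switch[of 1] True \<open>last_letter 1 = 1\<close> by auto
  have a: "factor_at w i0 (Suc n) = factor_at w p0 (Suc n)"
    using p0 i0_zero v_occurs_i0 unfolding factor_at_Suc v_occurs_def by simp
  have b: "factor_at w j0 (Suc n) = factor_at w p1 (Suc n)"
    using p1 j0_one v_occurs_j0 unfolding factor_at_Suc v_occurs_def by simp
  have "factor_at w i0 (Suc n) = factor_at w j0 (Suc n)"
    by (rule right_special_unique[OF a _ b]) (use p0 p1 v_followed_i0 v_followed_j0 in simp_all)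
  thus False using i0_zero j0_one unfolding factor_at_Suc by simp
qed

end

context sturmian_word
begin

theorem balanced: "\<not> unbalanced n"
proof
  assume "unbalanced n"
  then obtain n0 where "unbalanced n0" and minimal: "\<And>n'. n' < n0 \<Longrightarrow> \<not> unbalanced n'"
    using exists_least_iff[of unbalanced] by blast
  then obtain i j where "w i = 0" "w (Suc i + n0) = 0" "w j = 1" "w (Suc j + n0) = 1"
    "factor_at w (Suc i) n0 = factor_at w (Suc j) n0"
    unfolding unbalanced_def by blast
  with minimal interpret minimal_unbalanced w n0 i j
    by unfold_locales (use sturmian in auto)
  show False by (rule minimal_unbalanced_false)
qed

section \<open>The shift on the orbit closure\<close>

text \<open>A first difference with shift a below shift b would exhibit factors 0u0 and 1u1.\<close>

lemma lex_le_shift_of_first_letters: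
  assumes "a \<in> \<Omega>" "b \<in> \<Omega>" "a 0 = 0" "b 0 = 1"
  shows "lex_le (shift b) (shift a)"
  unfolding lex_le_def
proof
  assume "less_fun (shift a) (shift b)"
  then obtain k where "shift a k < shift b k" "\<And>t. t < k \<Longrightarrow> shift a t = shift b t"
    by (erule less_funE)
  hence k: "a (Suc k) < b (Suc k)" "\<And>t. t < k \<Longrightarrow> a (Suc t) = b (Suc t)"
    by (simp_all add: shift_def)
  have last: "a (Suc k) = 0" "b (Suc k) = 1"
    using k(1) orbit_closure_letter[OF assms(1), of "Suc k"]
      orbit_closure_letter[OF assms(2), of "Suc k"]
    by auto
  obtain i where i: "factor_at w i (Suc (Suc k)) = factor_at a 0 (Suc (Suc k))"
    using orbit_closure_factor[OF assms(1)] by blast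
  obtain j where j: "factor_at w j (Suc (Suc k)) = factor_at b 0 (Suc (Suc k))"
    using orbit_closure_factor[OF assms(2)] by blast
  have wi: "w (i + t) = a t" if "t < Suc (Suc k)" for t
    using i that unfolding factor_at_eq_iff by simp
  have wj: "w (j + t) = b t" if "t < Suc (Suc k)" for t
    using j that unfolding factor_at_eq_iff by simp
  have "unbalanced k"
    unfolding unbalanced_def
  proof (intro exI conjI)
    show "w i = 0" "w j = 1" using wi[of 0] wj[of 0] assms(3,4) by simp_all
    show "w (Suc i + k) = 0" "w (Suc j + k) = 1"
      using wi[of "Suc k"] wj[of "Suc k"] last by simp_all
    show "factor_at w (Suc i) k = factor_at w (Suc j) k"
      unfolding factor_at_eq_iff using wi[of "Suc t" for t] wj[of "Suc t" for t] k(2) by auto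
  qed
  thus False using balanced by blast
qed

lemma cyc_le_shift_of_sorted:
  assumes \<Omega>: "a \<in> \<Omega>" "b \<in> \<Omega>" "c \<in> \<Omega>" and le: "lex_le a b" "lex_le b c"
  shows "cyc_le (shift a) (shift b) (shift c)"
proof -
  have first: "a 0 \<le> b 0" "b 0 \<le> c 0" using le lex_le_first by auto
  have letters: "x 0 = 0 \<or> x 0 = 1" if "x \<in> \<Omega>" for x using orbit_closure_letter[OF that] .
  consider "a 0 = b 0" "b 0 = c 0" | "a 0 = b 0" "b 0 = 0" "c 0 = 1" | "a 0 = 0" "b 0 = 1" "c 0 = 1"
    using first letters[OF \<Omega>(1)] letters[OF \<Omega>(2)] letters[OF \<Omega>(3)] by fastforce
  thus ?thesis
  proof cases
    case 1
    thus ?thesis using lex_le_shift le unfolding cyclically_def by blast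
  next
    case 2
    thus ?thesis using lex_le_shift[OF _ le(1)] lex_le_shift_of_first_letters[OF \<Omega>(1,3)]
      unfolding cyclically_def by auto
  next
    case 3
    thus ?thesis using lex_le_shift[OF _ le(2)] lex_le_shift_of_first_letters[OF \<Omega>(1,3)]
      unfolding cyclically_def by auto
  qed
qed

lemma cyc_le_shift:
  assumes \<Omega>: "a \<in> \<Omega>" "b \<in> \<Omega>" "c \<in> \<Omega>" and "cyc_le a b c"
  shows "cyc_le (shift a) (shift b) (shift c)"
proof -
  consider "lex_le a b" "lex_le b c" | "lex_le b c" "lex_le c a" | "lex_le c a" "lex_le a b"
    using assms(4) unfolding cyclically_def by blast
  thus ?thesis
  proof cases
    case 1 thus ?thesis using cyc_le_shift_of_sorted[OF \<Omega>] by blast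
  next
    case 2 thus ?thesis
      using cyc_le_shift_of_sorted[OF \<Omega>(2,3,1)] cyclically_rotate[of _ "shift a"] by blast
  next
    case 3 thus ?thesis
      using cyc_le_shift_of_sorted[OF \<Omega>(3,1,2)] cyclically_rotate[of _ "shift c"] by blast
  qed
qed

lemma cyc_le_funpow_shift:
  assumes "a \<in> \<Omega>" "b \<in> \<Omega>" "c \<in> \<Omega>" "cyc_le a b c"
  shows "cyc_le ((shift ^^ m) a) ((shift ^^ m) b) ((shift ^^ m) c)"
proof (induction m)
  case (Suc m)
  thus ?case
    using cyc_le_shift[OF orbit_closure_shift[OF assms(1)] orbit_closure_shift[OF assms(2)]
        orbit_closure_shift[OF assms(3)]] by simp
qed (use assms in simp)

section \<open>Aperiodicity of the orbit closure\<close>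

lemma funpow_shift_word_neq:
  assumes "a < b" shows "(shift ^^ a) w \<noteq> (shift ^^ b) w"
proof
  assume eq: "(shift ^^ a) w = (shift ^^ b) w"
  have "w (n + a) = w (n + b)" for n
    using fun_cong[OF eq, of n] by (simp add: funpow_shift)
  thus False using no_eventual_period[OF assms] by blast
qed

lemma prefix_return_chain:
  obtains S :: "nat \<Rightarrow> nat"
  where "strict_mono S" "\<And>a b t. a \<le> b \<Longrightarrow> t < L \<Longrightarrow> w (S b - S a + t) = w t"
proof -
  define R where "R K = (SOME s. s \<ge> 1 \<and> factor_at w s K = factor_at w 0 K)" for K
  have R: "R K \<ge> 1" "factor_at w (R K) K = factor_at w 0 K" for K
    using someI_ex[OF prefix_recurs[of K]] unfolding R_def by auto
  define S where "S = rec_nat 0 (\<lambda>_ s. s + R (L + s))"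
  have S_Suc: "S (Suc k) = S k + R (L + S k)" for k
    unfolding S_def by simp
  have "strict_mono S"
    unfolding strict_mono_Suc_iff using S_Suc R(1) by (simp add: Suc_le_eq)
  moreover have "w (S b - S a + t) = w t" if "a \<le> b" "t < L" for a b t
    using that(1)
  proof (induction b)
    case (Suc b)
    show ?case
    proof (cases "a = Suc b")
      case False
      hence "a \<le> b" using Suc.prems by simp
      hence le: "S a \<le> S b" using \<open>strict_mono S\<close> by (simp add: strict_mono_less_eq)
      have "S b - S a + t < L + S b" using that(2) le by simp
      hence "w (R (L + S b) + (S b - S a + t)) = w (S b - S a + t)"
        using R(2)[of "L + S b"] unfolding factor_at_eq_iff by simp
      moreover have "S (Suc b) - S a + t = R (L + S b) + (S b - S a + t)"
        using le by (simp add: S_Suc)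
      ultimately show ?thesis using Suc.IH[OF \<open>a \<le> b\<close>] by (simp add: add.assoc)
    qed simp
  qed simp
  ultimately show ?thesis using that by blast
qed

lemma prefix_returns_at_multiple:
  assumes q: "q \<ge> 1" shows "\<exists>m\<ge>1. \<forall>t<L. w (q * m + t) = w t"
proof -
  obtain S :: "nat \<Rightarrow> nat" where S: "strict_mono S" "\<And>a b t. a \<le> b \<Longrightarrow> t < L \<Longrightarrow> w (S b - S a + t) = w t"
    using prefix_return_chain by blast
  have "\<not> inj_on (\<lambda>k. S k mod q) {..q}"
  proof
    assume "inj_on (\<lambda>k. S k mod q) {..q}"
    moreover have "(\<lambda>k. S k mod q) ` {..q} \<subseteq> {..<q}" using q by auto
    ultimately have "card {..q} \<le> card {..<q}" by (rule card_inj_on_le) simp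
    thus False by simp
  qed
  then obtain a b where "a \<noteq> b" "S a mod q = S b mod q"
    unfolding inj_on_def by blast
  then obtain a b where ab: "a < b" "S a mod q = S b mod q"
    by (cases "a < b") (auto simp: not_less_iff_gr_or_eq)
  have lt: "S a < S b" using S(1) ab(1) by (simp add: strict_mono_less)
  then obtain m where m: "S b - S a = q * m"
    using ab(2) mod_eq_dvd_iff_nat[of "S a" "S b" q] by (auto elim: dvdE)
  have "m \<ge> 1" using m lt by (cases m) auto
  moreover have "\<forall>t<L. w (q * m + t) = w t" using S(2)[of a b] ab(1) m by simp
  ultimately show ?thesis by blast
qed

text \<open>The map shift^q fixes z and preserves the cyclic order, so the points
  x n = shift^(q n) w move monotonically around z; but some x m with m > 1 agrees with
  x 0 = w on a long prefix and would have to lie on the other side of x 1.\<close>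

lemma orbit_closure_aperiodic:
  assumes z: "z \<in> \<Omega>" and q: "q \<ge> 1" shows "(shift ^^ q) z \<noteq> z"
proof
  assume per: "(shift ^^ q) z = z"
  define x where "x n = (shift ^^ (q * n)) w" for n
  have x_\<Omega>: "x n \<in> \<Omega>" for n
    unfolding x_def by (rule shift_word_in_orbit_closure)
  have x_step: "(shift ^^ q) (x n) = x (Suc n)" for n
    unfolding x_def by (simp add: funpow_add)
  have x_inj: "x a \<noteq> x b" if "a \<noteq> b" for a b
  proof (cases "a < b")
    case True
    thus ?thesis using q funpow_shift_word_neq[of "q * a" "q * b"] unfolding x_def by simp
  next
    case False
    hence "b < a" using that by simp
    thus ?thesis using q funpow_shift_word_neq[of "q * b" "q * a"] unfolding x_def by auto
  qed
  have x_ne_z: "x n \<noteq> z" for n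
    using x_inj[of n "Suc n"] x_step[of n] per by auto
  have step: "cyc_less z (x (Suc a)) (x (Suc b))" if "cyc_less z (x a) (x b)" for a b
  proof -
    have "cyc_le z (x (Suc a)) (x (Suc b))"
      using cyc_le_funpow_shift[OF z x_\<Omega> x_\<Omega> cyc_less_imp_cyc_le[OF that], of q]
      by (simp add: per x_step)
    moreover have "a \<noteq> b" using cyc_less_distinct[OF that] by auto
    ultimately show ?thesis
      using cyc_le_distinct_imp_cyc_less x_ne_z[of "Suc a", symmetric] x_inj[of "Suc a" "Suc b"]
        x_ne_z[of "Suc b", symmetric] by blast
  qed
  obtain d1 where d1: "w d1 \<noteq> z d1" using x_ne_z[of 0] unfolding x_def by auto
  obtain d2 where d2: "w d2 \<noteq> x 1 d2" using x_inj[of 0 1] unfolding x_def by auto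
  define L where "L = Suc (max d1 d2)"
  obtain m where m: "m \<ge> 1" "\<forall>t<L. w (q * m + t) = w t"
    using prefix_returns_at_multiple[OF q] by blast
  have close: "\<forall>t<L. w t = x m t" using m(2) unfolding x_def funpow_shift by (simp add: add.commute)
  have "m \<noteq> 1" using close d2 L_def by auto
  hence "1 < m" using m(1) by simp
  have x0: "x 0 = w" unfolding x_def by simp
  have "cyc_less z (x 0) (x 1) \<or> cyc_less z (x 1) (x 0)"
    using cyc_less_cases[OF x_ne_z[of 0, symmetric] x_inj[of 0 1] x_ne_z[of 1, symmetric]] by simp
  thus False
  proof
    assume start: "cyc_less z (x 0) (x 1)"
    have "transp (cyc_less z)" unfolding transp_def using cyc_less_trans by blast
    moreover have "cyc_less z (x n) (x (Suc n))" for n by (induction n) (use start step in auto)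
    ultimately have "cyc_less z (x 1) (x m)" using transp_chain \<open>1 < m\<close> by blast
    moreover have "cyc_less z w (x 1) \<longleftrightarrow> cyc_less z (x m) (x 1)"
      by (rule cyc_less_prefix_cong[OF close]) (use d1 d2 L_def in auto)
    ultimately show False using start x0 cyc_less_asym by auto
  next
    assume start: "cyc_less z (x 1) (x 0)"
    have "transp (\<lambda>a b. cyc_less z b a)" unfolding transp_def using cyc_less_trans by blast
    moreover have "cyc_less z (x (Suc n)) (x n)" for n by (induction n) (use start step in auto)
    ultimately have chain: "cyc_less z (x m) (x 1)"
      using transp_chain[of "\<lambda>a b. cyc_less z b a"] \<open>1 < m\<close> by blast
    have "cyc_less (x 1) w z"
      using start x0 cyclically_rotate[of less_fun z "x 1" w] by simp
    moreover have "cyc_less (x 1) w z \<longleftrightarrow> cyc_less (x 1) (x m) z"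
      by (rule cyc_less_prefix_cong[OF close]) (use d1 d2 L_def in auto)
    ultimately have "cyc_less z (x 1) (x m)"
      using cyclically_rotate[of less_fun z "x 1" "x m"] by simp
    thus False using chain cyc_less_asym by blast
  qed
qed

lemma cyc_less_orbit_point:
  assumes "x \<in> \<Omega>" "cyc_less a x b"
  shows "\<exists>s\<ge>1. cyc_less a ((shift ^^ s) w) b"
proof -
  have "x \<noteq> a" "x \<noteq> b" using cyc_less_distinct[OF assms(2)] by auto
  then obtain d1 d2 where d1: "x d1 \<noteq> a d1" and d2: "x d2 \<noteq> b d2"
    by (auto simp: fun_eq_iff)
  define L where "L = Suc (max d1 d2)"
  obtain i where "factor_at w i L = factor_at x 0 L"
    using orbit_closure_factor[OF assms(1)] by blast
  then obtain s where s: "s \<ge> 1" "factor_at w s L = factor_at x 0 L"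
    using factor_recurs[of 1 L i] by auto
  have "\<forall>t<L. x t = (shift ^^ s) w t"
    using s(2) unfolding factor_at_eq_iff funpow_shift by (simp add: add.commute)
  hence "cyc_less a x b \<longleftrightarrow> cyc_less a ((shift ^^ s) w) b"
    by (rule cyc_less_prefix_cong) (use d1 d2 L_def in auto)
  thus ?thesis using assms(2) s(1) by blast
qed

section \<open>Adjacent points and singularity\<close>

definition eventually_periodic :: "(nat \<Rightarrow> nat) \<Rightarrow> bool" where
  "eventually_periodic u \<longleftrightarrow> (\<exists>k k'. k < k' \<and> (shift ^^ k) u = (shift ^^ k') u)"

lemma orbit_closure_not_eventually_periodic:
  assumes "z \<in> \<Omega>" shows "\<not> eventually_periodic z"
proof
  assume "eventually_periodic z"
  then obtain k k' where "k < k'" "(shift ^^ k) z = (shift ^^ k') z"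
    unfolding eventually_periodic_def by blast
  have "(shift ^^ (k' - k)) ((shift ^^ k) z) = (shift ^^ (k' - k + k)) z"
    by (simp only: funpow_add o_apply)
  also have "\<dots> = (shift ^^ k') z" using \<open>k < k'\<close> by simp
  also have "\<dots> = (shift ^^ k) z" using \<open>(shift ^^ k) z = (shift ^^ k') z\<close> by simp
  finally have "(shift ^^ (k' - k)) ((shift ^^ k) z) = (shift ^^ k) z" .
  thus False
    using orbit_closure_aperiodic[OF orbit_closure_shift[OF assms], of "k' - k" k] \<open>k < k'\<close> by simp
qed

definition adjacent :: "(nat \<Rightarrow> nat) \<Rightarrow> (nat \<Rightarrow> nat) \<Rightarrow> bool" where
  "adjacent a b \<longleftrightarrow> (\<forall>x\<in>\<Omega>. \<not> cyc_less a x b)"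

lemma adjacent_shift:
  assumes \<Omega>: "a \<in> \<Omega>" "b \<in> \<Omega>" and adj: "adjacent a b"
  shows "adjacent (shift a) (shift b)"
  unfolding adjacent_def
proof (intro ballI notI)
  fix x assume "x \<in> \<Omega>" and between: "cyc_less (shift a) x (shift b)"
  obtain c where "(\<lambda>n. if n = 0 then c else x (n - 1)) \<in> \<Omega>"
    using orbit_closure_extend_left[OF \<open>x \<in> \<Omega>\<close>] by blast
  moreover have "shift (\<lambda>n. if n = 0 then c else x (n - 1)) = x"
    by (simp add: shift_def)
  ultimately obtain x' where x': "x' \<in> \<Omega>" "shift x' = x" by blast
  have "cyc_less a b x'"
  proof (rule ccontr)
    assume "\<not> cyc_less a b x'"
    hence "cyc_le a x' b" using cyc_le_iff_not_cyc_less by blast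
    moreover have "a \<noteq> x'" "x' \<noteq> b" "a \<noteq> b"
      using cyc_less_distinct[OF between] x'(2) by auto
    ultimately show False
      using adj x'(1) cyc_le_distinct_imp_cyc_less unfolding adjacent_def by blast
  qed
  hence "cyc_le (shift a) (shift b) (shift x')"
    by (intro cyc_le_shift[OF \<Omega> x'(1)] cyc_less_imp_cyc_le)
  hence "cyc_le (shift a) (shift b) x" using x'(2) by simp
  thus False using between cyc_le_iff_not_cyc_less by blast
qed

lemma adjacent_funpow_shift:
  "a \<in> \<Omega> \<Longrightarrow> b \<in> \<Omega> \<Longrightarrow> adjacent a b \<Longrightarrow> adjacent ((shift ^^ k) a) ((shift ^^ k) b)"
proof (induction k)
  case (Suc k)
  thus ?case
    using adjacent_shift[OF orbit_closure_shift[OF Suc.prems(1)]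
        orbit_closure_shift[OF Suc.prems(2)]]
    by simp
qed simp

text \<open>If a and b disagreed at positions k < k' where a carries the same letter, the
  shifted pairs at k and k' would start with the same two letters, and one of them would
  lie strictly between the other in the cyclic order.\<close>

lemma adjacent_mismatch_letters_differ:
  assumes \<Omega>: "a \<in> \<Omega>" "b \<in> \<Omega>" and adj: "adjacent a b" and aper: "\<not> eventually_periodic a"
    and k: "k < k'" "a k \<noteq> b k" "a k' \<noteq> b k'"
  shows "a k \<noteq> a k'"
proof
  assume same: "a k = a k'"
  let ?A = "(shift ^^ k) a" and ?B = "(shift ^^ k) b"
  let ?A' = "(shift ^^ k') a" and ?B' = "(shift ^^ k') b"
  have \<Omega>s: "?A \<in> \<Omega>" "?B \<in> \<Omega>" "?A' \<in> \<Omega>" "?B' \<in> \<Omega>"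
    using \<Omega> orbit_closure_shift by auto
  have adjs: "adjacent ?A ?B" "adjacent ?A' ?B'"
    using adjacent_funpow_shift[OF \<Omega> adj] by auto
  have first: "?A 0 = a k" "?B 0 = b k" "?A' 0 = a k'" "?B' 0 = b k'"
    by (simp_all add: funpow_shift)
  have "?A \<noteq> ?A'" using aper k(1) unfolding eventually_periodic_def by blast
  have letters: "a k = 0 \<and> b k = 1 \<and> b k' = 1 \<or> a k = 1 \<and> b k = 0 \<and> b k' = 0"
    using k(2,3) same orbit_closure_letter[OF \<Omega>(1), of k] orbit_closure_letter[OF \<Omega>(2), of k]
      orbit_closure_letter[OF \<Omega>(2), of k'] by auto
  have between: "cyc_less ?A ?A' ?B \<or> cyc_less ?A' ?A ?B'" if "less_fun ?A' ?B" "less_fun ?A ?B'"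
    using less_fun_linear[OF \<open>?A \<noteq> ?A'\<close>] that unfolding cyclically_def by blast
  have between': "cyc_less ?A ?A' ?B \<or> cyc_less ?A' ?A ?B'" if "less_fun ?B ?A" "less_fun ?B' ?A'"
    using less_fun_linear[OF \<open>?A \<noteq> ?A'\<close>] that unfolding cyclically_def by blast
  from letters have "cyc_less ?A ?A' ?B \<or> cyc_less ?A' ?A ?B'"
  proof
    assume "a k = 0 \<and> b k = 1 \<and> b k' = 1"
    hence "less_fun ?A' ?B" "less_fun ?A ?B'" using first same by (auto intro!: less_fun_first)
    thus ?thesis by (rule between)
  next
    assume "a k = 1 \<and> b k = 0 \<and> b k' = 0"
    hence "less_fun ?B ?A" "less_fun ?B' ?A'" using first same by (auto intro!: less_fun_first)
    thus ?thesis by (rule between')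
  qed
  thus False using adjs \<Omega>s unfolding adjacent_def by blast
qed

lemma adjacent_asymptotic:
  assumes \<Omega>: "a \<in> \<Omega>" "b \<in> \<Omega>" and "a \<noteq> b" "adjacent a b" "\<not> eventually_periodic a"
  obtains d where "(shift ^^ Suc d) a = (shift ^^ Suc d) b" "a d \<noteq> b d"
proof -
  define D where "D = {k. a k \<noteq> b k}"
  have "finite {k \<in> D. a k = e}" for e
  proof (rule ccontr)
    assume inf: "infinite {k \<in> D. a k = e}"
    hence "{k \<in> D. a k = e} \<noteq> {}" by (metis finite.emptyI)
    then obtain k where k: "k \<in> D" "a k = e" by blast
    have "\<not> (\<forall>n \<in> {k \<in> D. a k = e}. n \<le> k)"
      using inf finite_nat_set_iff_bounded_le by blast
    then obtain k' where k': "k' \<in> D" "a k' = e" "k < k'" by auto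
    have "a k \<noteq> a k'"
      using k k' adjacent_mismatch_letters_differ[OF \<Omega> assms(4,5) k'(3)] unfolding D_def by blast
    thus False using k(2) k'(2) by simp
  qed
  moreover have "D \<subseteq> {k \<in> D. a k = 0} \<union> {k \<in> D. a k = 1}"
    using orbit_closure_letter[OF \<Omega>(1)] by auto
  ultimately have fin: "finite D" by (meson finite_Un finite_subset)
  have "D \<noteq> {}" using \<open>a \<noteq> b\<close> unfolding D_def by auto
  hence "Max D \<in> D" using fin by simp
  moreover have "a k = b k" if "Max D < k" for k
    using Max_ge[OF fin, of k] that unfolding D_def by auto
  hence "(shift ^^ Suc (Max D)) a = (shift ^^ Suc (Max D)) b"
    unfolding funpow_shift by auto
  ultimately show ?thesis using that unfolding D_def by blast
qed

lemma characteristic_unique: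
  assumes "is_characteristic w x" "is_characteristic w x'" shows "x = x'"
proof
  fix k
  have left_special_positions: "\<exists>i i'. factor_at w (Suc i) (Suc k) = u
      \<and> factor_at w (Suc i') (Suc k) = u \<and> w i = 0 \<and> w i' = 1" if ls: "left_special u w" and len: "length u = Suc k" for u
  proof -
    obtain i i' where "factor_at w i (Suc (Suc k)) = 0 # u" "factor_at w i' (Suc (Suc k)) = 1 # u"
      using ls len unfolding left_special_def is_factor_def by auto
    thus ?thesis unfolding factor_at_Suc[of w i] factor_at_Suc[of w i'] by auto
  qed
  let ?u = "map x [0..<Suc k]" and ?u' = "map x' [0..<Suc k]"
  have ls: "left_special ?u w" "left_special ?u' w"
    using assms unfolding is_characteristic_def by blast+
  obtain i i' where i: "factor_at w (Suc i) (Suc k) = ?u" "factor_at w (Suc i') (Suc k) = ?u"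
    "w i = 0" "w i' = 1"
    using left_special_positions[OF ls(1)] by (auto simp del: upt_Suc)
  obtain j j' where j: "factor_at w (Suc j) (Suc k) = ?u'" "factor_at w (Suc j') (Suc k) = ?u'"
    "w j = 0" "w j' = 1"
    using left_special_positions[OF ls(2)] by (auto simp del: upt_Suc)
  have "factor_at w (Suc i) (Suc k) = factor_at w (Suc j) (Suc k)"
    by (rule left_special_unique[where i' = i' and j' = j']) (use i j in auto)
  hence "?u = ?u'" using i j by simp
  thus "x k = x' k" by (simp del: upt_Suc)
qed

lemma singular_if_asymptotic:
  assumes "y \<in> \<Omega>" and d: "(shift ^^ Suc d) w = (shift ^^ Suc d) y" "w d \<noteq> y d"
  shows "singular w"
proof -
  let ?x = "(shift ^^ Suc d) w"
  have "is_characteristic w ?x"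
    unfolding is_characteristic_def
  proof (intro conjI allI)
    show "?x \<in> \<Omega>" by (rule shift_word_in_orbit_closure)
    fix k
    have prefix: "map ?x [0..<k] = factor_at ?x 0 k" by (simp add: factor_at_def)
    have u: "map ?x [0..<k] = factor_at w (Suc d) k"
      unfolding prefix unfolding funpow_shift by (simp add: factor_at_eq_iff add.commute)
    have uy: "map ?x [0..<k] = factor_at y (Suc d) k"
      unfolding prefix unfolding d(1) unfolding funpow_shift
      by (simp add: factor_at_eq_iff add.commute)
    obtain i where i: "factor_at w i (Suc k) = factor_at y d (Suc k)"
      using orbit_closure_factor[OF assms(1)] by blast
    have "factor_at w d (Suc k) = w d # map ?x [0..<k]"
      unfolding factor_at_Suc u ..
    hence "is_factor (w d # map ?x [0..<k]) w"
      unfolding is_factor_def by (intro exI[of _ d]) (simp del: upt_Suc)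
    moreover have "factor_at w i (Suc k) = y d # map ?x [0..<k]"
      using i unfolding factor_at_Suc uy by simp
    hence "is_factor (y d # map ?x [0..<k]) w"
      unfolding is_factor_def by (intro exI[of _ i]) (simp del: upt_Suc)
    moreover have "{w d, y d} = {0, 1}"
      using d(2) letter_cases[of d] orbit_closure_letter[OF assms(1), of d] by auto
    ultimately show "left_special (map ?x [0..<k]) w"
      unfolding left_special_def by (auto simp: doubleton_eq_iff)
  qed
  hence "characteristic w = ?x"
    unfolding characteristic_def using characteristic_unique by blast
  thus ?thesis unfolding singular_def by (intro exI[of _ "Suc d"]) auto
qed

section \<open>Idempotent ultrafilters\<close>

lemma orbit_closure_binary: "x \<in> \<Omega> \<Longrightarrow> binary_word x"
  using orbit_closure_letter by (simp add: binary_word_def)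

text \<open>Otherwise the two points would be adjacent, hence asymptotic, and the suffix where
  they merge would be the characteristic word.\<close>

lemma exists_shift_between:
  assumes nonsingular: "\<not> singular w" and \<Omega>: "a \<in> \<Omega>" "b \<in> \<Omega>" and "a \<noteq> b" "a = w \<or> b = w"
  shows "\<exists>i\<ge>1. cyc_less a ((shift ^^ i) w) b"
proof (rule ccontr)
  assume "\<not> ?thesis"
  hence "adjacent a b"
    unfolding adjacent_def using cyc_less_orbit_point by blast
  then obtain d where d: "(shift ^^ Suc d) a = (shift ^^ Suc d) b" "a d \<noteq> b d"
    using adjacent_asymptotic[OF \<Omega> \<open>a \<noteq> b\<close>] orbit_closure_not_eventually_periodic[OF \<Omega>(1)]
    by blast
  from \<open>a = w \<or> b = w\<close> show False
  proof
    assume "a = w"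
    thus False using singular_if_asymptotic[OF \<Omega>(2)] d nonsingular by blast
  next
    assume "b = w"
    thus False using singular_if_asymptotic[OF \<Omega>(1)] d nonsingular by metis
  qed
qed

end

locale sturmian_idempotent = sturmian_word w + nat_ultrafilter p
  for w :: "nat \<Rightarrow> nat" and p :: "nat set set" +
  assumes idempotent: "ultra_plus p p = p" and nonsingular: "\<not> singular w"
begin

lemma ulim_in_orbit_closure:
  assumes "x \<in> \<Omega>" shows "ulim x \<in> \<Omega>"
  unfolding orbit_closure_iff
proof
  fix k
  obtain i where "\<forall>t<k. x (i + t) = ulim x t"
    using mem_nonempty[OF ulim_prefix_agrees[OF orbit_closure_binary[OF assms], of k]] by blast
  hence "factor_at x i k = factor_at (ulim x) 0 k" unfolding factor_at_eq_iff by simp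
  moreover obtain j where "factor_at w j k = factor_at x i k"
    using orbit_closure_factor[OF assms] by blast
  ultimately show "\<exists>j. factor_at w j k = factor_at (ulim x) 0 k" by auto
qed

lemma cyc_le_ulim_of_orbit_closure:
  assumes \<Omega>: "a \<in> \<Omega>" "b \<in> \<Omega>" "c \<in> \<Omega>" and "cyc_le a b c"
  shows "cyc_le (ulim a) (ulim b) (ulim c)"
  using cyc_le_ulim[OF orbit_closure_binary[OF \<Omega>(1)] orbit_closure_binary[OF \<Omega>(2)]
      orbit_closure_binary[OF \<Omega>(3)]] cyc_le_funpow_shift[OF assms] by blast

text \<open>Two shifts of w on either side of y = ulim w in the cyclic order are carried by ulim
  to y and two shifts of y, in both cyclic positions; this forces two of them to coincide,
  although y is not eventually periodic.\<close>

lemma ulim_word: "ulim w = w"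
proof (rule ccontr)
  let ?y = "ulim w" and ?T = "\<lambda>i. shift ^^ i"
  assume "?y \<noteq> w"
  have y: "?y \<in> \<Omega>" by (rule ulim_in_orbit_closure[OF word_in_orbit_closure])
  obtain i where i: "i \<ge> 1" "cyc_less w (?T i w) ?y"
    using exists_shift_between[OF nonsingular word_in_orbit_closure y] \<open>?y \<noteq> w\<close> by auto
  obtain j where j: "j \<ge> 1" "cyc_less ?y (?T j w) w"
    using exists_shift_between[OF nonsingular y word_in_orbit_closure] \<open>?y \<noteq> w\<close> by auto
  have between: "cyc_less w (?T i w) (?T j w)" "cyc_less (?T i w) ?y (?T j w)"
    using cyc_less_interleave[OF i(2) j(2)] by auto
  hence "cyc_le ?y (?T i ?y) (?T j ?y)" "cyc_le (?T i ?y) ?y (?T j ?y)"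
    using cyc_le_ulim_of_orbit_closure[OF word_in_orbit_closure shift_word_in_orbit_closure
        shift_word_in_orbit_closure, of i j]
      cyc_le_ulim_of_orbit_closure[OF shift_word_in_orbit_closure y shift_word_in_orbit_closure,
        of i j]
    by (auto simp: ulim_funpow_shift ulim_ulim[OF idempotent] dest: cyc_less_imp_cyc_le)
  hence "?y = ?T i ?y \<or> ?T i ?y = ?T j ?y \<or> ?y = ?T j ?y"
    by (rule cyc_le_antisym)
  moreover have "i \<noteq> j" using cyc_less_distinct[OF between(1)] by auto
  moreover have "eventually_periodic ?y" if "?T k ?y = ?T k' ?y" "k \<noteq> k'" for k k'
    using that unfolding eventually_periodic_def by (metis nat_neq_iff)
  ultimately have "eventually_periodic ?y"
    using i(1) j(1) by (metis funpow_0 not_one_le_zero)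
  thus False using orbit_closure_not_eventually_periodic[OF y] by blast
qed

end

theorem mainTheorem13:
  fixes w :: "nat \<Rightarrow> nat" and p :: "nat set set"
  assumes "sturmian w" and "\<not> singular w" and "idempotent_ultrafilter p"
  shows "pstar p w = w"
proof -
  interpret sturmian_idempotent w p
    using assms
    by unfold_locales (auto simp: sturmian_word_def nat_ultrafilter_def idempotent_ultrafilter_def)
  show ?thesis using pstar_eq_ulim[OF binary] ulim_word by simp
qed

end
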